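(* Let $\Lambda$ be a finite $k$-graph without sources and $C$ a component. Then $C$ is a positive harmonic component if and only if $C$ is positive and for every component $D\subseteq\overline C\setminus C$ one has $\rho(A_i^D)\le\rho(A_i^C)$ for all $i=1,\dots,k$ and $(\rho(A_1^D),\dots,\rho(A_k^D))\neq(\rho(A_1^C),\dots,\rho(A_k^C))$.
   Context: A $k$-graph $(\Lambda,d)$ is a countable small category with functor $d:\Lambda\to\mathbb N^k$ having the unique factorisation property (for $d(\lambda)=m+n$ there are unique $\mu,\nu$ with $d(\mu)=m,d(\nu)=n,\lambda=\mu\nu$). $\Lambda^0=d^{-1}(0)$ are the vertices, $\Lambda^n=d^{-1}(n)$, $r,s$ range and source, $v\Lambda^nw=\{\lambda\in\Lambda^n:r(\lambda)=v,s(\lambda)=w\}$, $v\Lambda w=\bigcup_nv\Lambda^nw$, and for $V,W\subseteq\Lambda^0$, $V\Lambda W=\bigcup_{v\in V,w\in W}v\Lambda w$. Finite: each $\Lambda^n$ finite; without sources: $v\Lambda^n\neq\emptyset$ for all $v,n$. Vertex matrices $A_i(v,w)=|v\Lambda^{e_i}w|$, $A^n=\prod_iA_i^{n_i}$. Define $v\le w$ iff $v\Lambda w\ne\emptyset$ and $v\sim w$ iff $v\le w$ and $w\le v$; the classes are components. A component $C$ is trivial if $C\Lambda C=\{v\}$ for a single vertex, non-trivial otherwise; positive if $\rho(A_i^C)>0$ for all $i$. $\overline V=\{w\in\Lambda^0:w\Lambda V\ne\emptyset\}$. For a matrix $B$ and $R,S\subseteq\Lambda^0$, $B^{R,S}$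 is the submatrix with rows $R$, columns $S$, $B^S=B^{S,S}$; $\rho$ is spectral radius. For a finite sequence $F=(a_1,\dots,a_m)$ in $\mathbb N^k\setminus\{0\}$ (repetitions allowed), $A_F=\sum_jA^{a_j}$; $F$ is well chosen if $A_F(v,w)>0$ iff $v\Lambda^lw\ne\emptyset$ for some $l\ne0$. A non-trivial component $C$ is $F$-harmonic if $\overline C\setminus C=\emptyset$ or $\rho(A_F^C)>\rho(A_F^{\overline C\setminus C})$. A positive harmonic component is a positive component that is $F$-harmonic for some well chosen $F$ (equivalently, for every well chosen $F$). *)

theory Defs
  imports "HOL-Analysis.Analysis"
begin

text \<open>A small category is given by its set of morphisms; objects are identified
with their identity morphisms. Degrees in N^k are functions nat => nat supported
in {..<k} (coordinate i corresponds to e_(i+1) of the paper).\<close>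

record 'a kgraph =
  paths :: "'a set"
  rng   :: "'a \<Rightarrow> 'a"
  src   :: "'a \<Rightarrow> 'a"
  cmp   :: "'a \<Rightarrow> 'a \<Rightarrow> 'a"
  deg   :: "'a \<Rightarrow> nat \<Rightarrow> nat"

definition in_Nk :: "nat \<Rightarrow> (nat \<Rightarrow> nat) \<Rightarrow> bool" where
  "in_Nk k n \<longleftrightarrow> (\<forall>i\<ge>k. n i = 0)"

definition unitvec :: "nat \<Rightarrow> nat \<Rightarrow> nat" where
  "unitvec i = (\<lambda>j. if j = i then 1 else 0)"

definition is_kgraph :: "nat \<Rightarrow> 'a kgraph \<Rightarrow> bool" where
  "is_kgraph k L \<longleftrightarrow>
     1 \<le> k \<and>
     countable (paths L) \<and>
     \<comment> \<open>category structure\<close>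
     (\<forall>l\<in>paths L. rng L l \<in> paths L \<and> src L l \<in> paths L) \<and>
     (\<forall>l\<in>paths L. rng L (rng L l) = rng L l \<and> src L (rng L l) = rng L l
                  \<and> rng L (src L l) = src L l \<and> src L (src L l) = src L l) \<and>
     (\<forall>l\<in>paths L. \<forall>m\<in>paths L. src L l = rng L m \<longrightarrow>
        cmp L l m \<in> paths L \<and> rng L (cmp L l m) = rng L l \<and> src L (cmp L l m) = src L m) \<and>
     (\<forall>l\<in>paths L. \<forall>m\<in>paths L. \<forall>n\<in>paths L. src L l = rng L m \<longrightarrow> src L m = rng L n \<longrightarrow>
        cmp L (cmp L l m) n = cmp L l (cmp L m n)) \<and>
     (\<forall>l\<in>paths L. cmp L (rng L l) l = l \<and> cmp L l (src L l) = l) \<and>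
     \<comment> \<open>degree functor into N^k\<close>
     (\<forall>l\<in>paths L. in_Nk k (deg L l)) \<and>
     (\<forall>l\<in>paths L. \<forall>m\<in>paths L. src L l = rng L m \<longrightarrow>
        deg L (cmp L l m) = (\<lambda>i. deg L l i + deg L m i)) \<and>
     \<comment> \<open>unique factorisation property\<close>
     (\<forall>l\<in>paths L. \<forall>m n. deg L l = (\<lambda>i. m i + n i) \<longrightarrow>
        (\<exists>!p. fst p \<in> paths L \<and> snd p \<in> paths L \<and> deg L (fst p) = m \<and> deg L (snd p) = n
              \<and> src L (fst p) = rng L (snd p) \<and> cmp L (fst p) (snd p) = l))"

definition vertices :: "'a kgraph \<Rightarrow> 'a set" where
  "vertices L = {v \<in> paths L. deg L v = (\<lambda>_. 0)}"

definition finite_kgraph :: "nat \<Rightarrow> 'a kgraph \<Rightarrow> bool" where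
  "finite_kgraph k L \<longleftrightarrow> (\<forall>n. finite {l \<in> paths L. deg L l = n})"

definition no_sources :: "nat \<Rightarrow> 'a kgraph \<Rightarrow> bool" where
  "no_sources k L \<longleftrightarrow>
     (\<forall>v\<in>vertices L. \<forall>n. in_Nk k n \<longrightarrow> (\<exists>l\<in>paths L. rng L l = v \<and> deg L l = n))"

text \<open>Matrices indexed by vertices are functions 'a => 'a => real; all products are
taken over the (finite) vertex set V.\<close>

definition mmult :: "'a set \<Rightarrow> ('a \<Rightarrow> 'a \<Rightarrow> real) \<Rightarrow> ('a \<Rightarrow> 'a \<Rightarrow> real) \<Rightarrow> ('a \<Rightarrow> 'a \<Rightarrow> real)" where
  "mmult V B C = (\<lambda>v w. \<Sum>u\<in>V. B v u * C u w)"

definition mident :: "'a \<Rightarrow> 'a \<Rightarrow> real" where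
  "mident = (\<lambda>v w. if v = w then 1 else 0)"

fun mpow :: "'a set \<Rightarrow> ('a \<Rightarrow> 'a \<Rightarrow> real) \<Rightarrow> nat \<Rightarrow> ('a \<Rightarrow> 'a \<Rightarrow> real)" where
  "mpow V B 0 = mident"
| "mpow V B (Suc m) = mmult V B (mpow V B m)"

definition vmat :: "'a kgraph \<Rightarrow> nat \<Rightarrow> 'a \<Rightarrow> 'a \<Rightarrow> real" where
  "vmat L i = (\<lambda>v w. real (card {l \<in> paths L. deg L l = unitvec i \<and> rng L l = v \<and> src L l = w}))"

definition vmat_pow :: "nat \<Rightarrow> 'a kgraph \<Rightarrow> (nat \<Rightarrow> nat) \<Rightarrow> 'a \<Rightarrow> 'a \<Rightarrow> real" where
  "vmat_pow k L n =
     foldr (\<lambda>i M. mmult (vertices L) (mpow (vertices L) (vmat L i) (n i)) M) [0..<k] mident"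

definition vmat_F :: "nat \<Rightarrow> 'a kgraph \<Rightarrow> (nat \<Rightarrow> nat) list \<Rightarrow> 'a \<Rightarrow> 'a \<Rightarrow> real" where
  "vmat_F k L F = (\<lambda>v w. \<Sum>j<length F. vmat_pow k L (F ! j) v w)"

definition spec_rad :: "'a set \<Rightarrow> ('a \<Rightarrow> 'a \<Rightarrow> real) \<Rightarrow> real" where
  "spec_rad S B = Max (insert 0 {cmod z | z. \<exists>x::'a \<Rightarrow> complex. (\<exists>u\<in>S. x u \<noteq> 0) \<and>
       (\<forall>v\<in>S. (\<Sum>w\<in>S. complex_of_real (B v w) * x w) = z * x v)})"

definition path_between :: "'a kgraph \<Rightarrow> 'a \<Rightarrow> 'a \<Rightarrow> bool" where
  "path_between L v w \<longleftrightarrow> (\<exists>l\<in>paths L. rng L l = v \<and> src L l = w)"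

definition vequiv :: "'a kgraph \<Rightarrow> 'a \<Rightarrow> 'a \<Rightarrow> bool" where
  "vequiv L v w \<longleftrightarrow> path_between L v w \<and> path_between L w v"

definition is_component :: "'a kgraph \<Rightarrow> 'a set \<Rightarrow> bool" where
  "is_component L C \<longleftrightarrow> (\<exists>v\<in>vertices L. C = {w \<in> vertices L. vequiv L v w})"

definition paths_between :: "'a kgraph \<Rightarrow> 'a set \<Rightarrow> 'a set \<Rightarrow> 'a set" where
  "paths_between L V W = {l \<in> paths L. rng L l \<in> V \<and> src L l \<in> W}"

definition trivial_comp :: "'a kgraph \<Rightarrow> 'a set \<Rightarrow> bool" where
  "trivial_comp L C \<longleftrightarrow> (\<exists>v. paths_between L C C = {v})"

definition positive_comp :: "nat \<Rightarrow> 'a kgraph \<Rightarrow> 'a set \<Rightarrow> bool" where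
  "positive_comp k L C \<longleftrightarrow> (\<forall>i<k. spec_rad C (vmat L i) > 0)"

definition closure_above :: "'a kgraph \<Rightarrow> 'a set \<Rightarrow> 'a set" where
  "closure_above L V = {w \<in> vertices L. paths_between L {w} V \<noteq> {}}"

definition well_chosen :: "nat \<Rightarrow> 'a kgraph \<Rightarrow> (nat \<Rightarrow> nat) list \<Rightarrow> bool" where
  "well_chosen k L F \<longleftrightarrow>
     (\<forall>a\<in>set F. in_Nk k a \<and> a \<noteq> (\<lambda>_. 0)) \<and>
     (\<forall>v\<in>vertices L. \<forall>w\<in>vertices L.
        vmat_F k L F v w > 0 \<longleftrightarrow>
        (\<exists>l\<in>paths L. deg L l \<noteq> (\<lambda>_. 0) \<and> rng L l = v \<and> src L l = w))"

definition F_harmonic :: "nat \<Rightarrow> 'a kgraph \<Rightarrow> (nat \<Rightarrow> nat) list \<Rightarrow> 'a set \<Rightarrow> bool" where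
  "F_harmonic k L F C \<longleftrightarrow> \<not> trivial_comp L C \<and>
     (closure_above L C - C = {} \<or>
      spec_rad C (vmat_F k L F) > spec_rad (closure_above L C - C) (vmat_F k L F))"

definition positive_harmonic :: "nat \<Rightarrow> 'a kgraph \<Rightarrow> 'a set \<Rightarrow> bool" where
  "positive_harmonic k L C \<longleftrightarrow> positive_comp k L C \<and>
     (\<exists>F. well_chosen k L F \<and> F_harmonic k L F C)"

end

theory Submission
  imports Defs "Jordan_Normal_Form.Spectral_Radius"
begin

text \<open>For a nontrivial component D and a well-chosen F the matrix A_F^D is positive and commutes
  with every A_i^D, so its Perron eigenvector is a common eigenvector of all of them and
  \<rho>(A_F^D) = \<Sum>_j \<Prod>_i \<rho>(A_i^D)^(a_j i).

  If C is F-harmonic, then with S = closure(C) - C the Perron eigenvector z of A_F^C extends to a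
  positive eigenvector of A_F on closure(C) by solving (\<rho>(A_F^C) - A_F^S) u = A_F^{S,C} z, which is
  possible with u > 0 because \<rho>(A_F^S) < \<rho>(A_F^C). This eigenvalue has a one-dimensional
  eigenspace on closure(C), so the extension is a common eigenvector of the A_i there; it bounds
  \<rho>(A_i^D) by \<rho>(A_i^C) for every component D in S, and equality for all i would give
  \<rho>(A_F^D) = \<rho>(A_F^C) > \<rho>(A_F^S), which is impossible.

  Conversely, choose F well-chosen and containing all unit vectors. If \<rho>(A_F^S) \<ge> \<rho>(A_F^C) > 0,
  a nonnegative subeigenvector of A_F^S restricted to the component E of a minimal vertex of its
  support shows \<rho>(A_F^S) \<le> \<rho>(A_F^E), whereas the radius condition and strict monotonicity of the
  polynomial above give \<rho>(A_F^E) < \<rho>(A_F^C).\<close>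

no_notation Finite_Cartesian_Product.vec_nth (infixl "$" 90)

section \<open>Nonnegative matrices on finite index sets\<close>

definition mvmult :: "'a set \<Rightarrow> ('a \<Rightarrow> 'a \<Rightarrow> real) \<Rightarrow> ('a \<Rightarrow> real) \<Rightarrow> 'a \<Rightarrow> real" where
  "mvmult S B x u = (\<Sum>w\<in>S. B u w * x w)"

definition is_eigval :: "'a set \<Rightarrow> ('a \<Rightarrow> 'a \<Rightarrow> real) \<Rightarrow> complex \<Rightarrow> bool" where
  "is_eigval S B z \<longleftrightarrow> (\<exists>x::'a \<Rightarrow> complex. (\<exists>u\<in>S. x u \<noteq> 0) \<and>
       (\<forall>v\<in>S. (\<Sum>w\<in>S. complex_of_real (B v w) * x w) = z * x v))"

lemma spec_rad_eq_Max_eigvals: "spec_rad S B = Max (insert 0 (cmod ` {z. is_eigval S B z}))"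
  unfolding spec_rad_def is_eigval_def by (rule arg_cong[where f=Max]) auto

lemma is_eigval_of_real_eigvec:
  assumes "\<exists>u\<in>S. x u \<noteq> 0" "\<forall>v\<in>S. mvmult S B x v = c * x v"
  shows "is_eigval S B (complex_of_real c)"
  unfolding is_eigval_def
proof (intro exI[of _ "\<lambda>u. complex_of_real (x u)"] conjI ballI)
  show "\<exists>u\<in>S. complex_of_real (x u) \<noteq> 0" using assms(1) by simp
  fix v assume "v \<in> S"
  hence "complex_of_real (mvmult S B x v) = complex_of_real (c * x v)" using assms(2) by simp
  thus "(\<Sum>w\<in>S. complex_of_real (B v w) * complex_of_real (x w)) = complex_of_real c * complex_of_real (x v)"
    unfolding mvmult_def by simp
qed

lemma is_eigval_divide:
  assumes "is_eigval S (\<lambda>u w. B u w / t) z" "t \<noteq> 0"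
  shows "is_eigval S B (z * t)"
proof -
  from assms obtain y where y0: "\<exists>u\<in>S. y u \<noteq> 0"
    and ev: "\<forall>v\<in>S. (\<Sum>w\<in>S. complex_of_real (B v w / t) * y w) = z * y v"
    unfolding is_eigval_def by blast
  have "(\<Sum>w\<in>S. complex_of_real (B v w) * y w) = z * t * y v" if "v \<in> S" for v
  proof -
    have "(\<Sum>w\<in>S. complex_of_real (B v w) * y w)
        = complex_of_real t * (\<Sum>w\<in>S. complex_of_real (B v w / t) * y w)"
      using assms(2) by (simp add: sum_distrib_left field_simps)
    also have "\<dots> = z * t * y v" using ev that by simp
    finally show ?thesis .
  qed
  with y0 show ?thesis unfolding is_eigval_def by blast
qed

lemma mvmult_mono:
  assumes "\<forall>w\<in>S. 0 \<le> B u w" "\<forall>w\<in>S. x w \<le> y w"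
  shows "mvmult S B x u \<le> mvmult S B y u"
  unfolding mvmult_def using assms by (intro sum_mono mult_left_mono) auto

lemma mvmult_nonneg:
  assumes "\<forall>w\<in>S. 0 \<le> B u w" "\<forall>w\<in>S. 0 \<le> x w"
  shows "0 \<le> mvmult S B x u"
  unfolding mvmult_def using assms by (intro sum_nonneg) auto

lemma mvmult_pos:
  assumes S: "finite S" and P: "\<forall>u\<in>S. \<forall>w\<in>S. 0 < P u w"
    and x: "\<forall>u\<in>S. 0 \<le> x u" and w0: "w0 \<in> S" "0 < x w0" and u: "u \<in> S"
  shows "0 < mvmult S P x u"
  unfolding mvmult_def
proof (rule sum_pos2[OF S w0(1)])
  show "0 < P u w0 * x w0" using P w0 u by simp
  show "0 \<le> P u w * x w" if "w \<in> S" for w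
    using P x u that by (simp add: less_imp_le)
qed

lemma mvmult_cmult: "mvmult S B (\<lambda>w. c * x w) u = c * mvmult S B x u"
  unfolding mvmult_def by (simp add: sum_distrib_left algebra_simps)

lemma mvmult_diff: "mvmult S B (\<lambda>w. x w - y w) u = mvmult S B x u - mvmult S B y u"
  unfolding mvmult_def by (simp add: algebra_simps sum_subtractf)

lemma mvmult_cong: "\<forall>w\<in>S. x w = y w \<Longrightarrow> mvmult S B x u = mvmult S B y u"
  unfolding mvmult_def by (intro sum.cong) auto

lemma mvmult_mat_cong: "\<forall>w\<in>S. B u w = B' u w \<Longrightarrow> mvmult S B x u = mvmult S B' x u"
  unfolding mvmult_def by (intro sum.cong) auto

lemma mvmult_mmult: "mvmult S (mmult S P Q) x u = mvmult S P (mvmult S Q x) u"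
  unfolding mvmult_def mmult_def
  by (simp add: sum_distrib_left sum_distrib_right mult.assoc) (rule sum.swap)

lemma mvmult_mident: "finite S \<Longrightarrow> u \<in> S \<Longrightarrow> mvmult S mident x u = x u"
  unfolding mvmult_def mident_def by (simp add: if_distrib[of "\<lambda>c. c * _"] cong: if_cong)

lemma mvmult_sum_mat: "mvmult S (\<lambda>u w. \<Sum>j\<in>J. C j u w) x u = (\<Sum>j\<in>J. mvmult S (C j) x u)"
  unfolding mvmult_def by (simp add: sum_distrib_right) (rule sum.swap)

lemma mvmult_union:
  "finite S \<Longrightarrow> finite T \<Longrightarrow> S \<inter> T = {} \<Longrightarrow>
    mvmult (S \<union> T) B x u = mvmult S B x u + mvmult T B x u"
  unfolding mvmult_def by (rule sum.union_disjoint)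

lemma mvmult_extend_zero:
  assumes "D \<subseteq> S" "finite S"
  shows "mvmult S B (\<lambda>w. if w \<in> D then x w else 0) u = mvmult D B x u"
proof -
  have "mvmult S B (\<lambda>w. if w \<in> D then x w else 0) u = (\<Sum>w\<in>S \<inter> D. B u w * x w)"
    unfolding mvmult_def using assms(2) by (simp add: sum.inter_restrict if_distrib[of "\<lambda>c. _ * c"] cong: if_cong)
  also have "S \<inter> D = D" using assms(1) by auto
  finally show ?thesis unfolding mvmult_def .
qed

lemma mmult_assoc: "mmult S (mmult S A B) C = mmult S A (mmult S B C)"
  unfolding mmult_def
  by (rule ext, rule ext) (simp add: sum_distrib_left sum_distrib_right mult.assoc, rule sum.swap)

lemma mmult_mident_left: "finite S \<Longrightarrow> u \<in> S \<Longrightarrow> mmult S mident B u w = B u w"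
  unfolding mmult_def mident_def by (simp add: if_distrib[of "\<lambda>c. c * _"] cong: if_cong)

lemma mmult_mident_right: "finite S \<Longrightarrow> w \<in> S \<Longrightarrow> mmult S B mident u w = B u w"
  unfolding mmult_def mident_def by (simp add: if_distrib[of "\<lambda>c. _ * c"] cong: if_cong)

lemma mpow_Suc_right:
  assumes S: "finite S" and uw: "u \<in> S" "w \<in> S"
  shows "mpow S B (Suc n) u w = mmult S (mpow S B n) B u w"
  using uw
proof (induction n arbitrary: u w)
  case 0 thus ?case using S by (simp add: mmult_mident_left mmult_mident_right)
next
  case (Suc n)
  have "mpow S B (Suc (Suc n)) u w = (\<Sum>m\<in>S. B u m * mpow S B (Suc n) m w)"
    by (simp add: mmult_def)
  also have "\<dots> = (\<Sum>m\<in>S. B u m * mmult S (mpow S B n) B m w)"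
    using Suc by (intro sum.cong) auto
  also have "\<dots> = mmult S B (mmult S (mpow S B n) B) u w"
    unfolding mmult_def[of S B "mmult S (mpow S B n) B"] ..
  also have "\<dots> = mmult S (mpow S B (Suc n)) B u w" by (simp add: mmult_assoc)
  finally show ?case .
qed

definition index_list :: "'a set \<Rightarrow> 'a list" where
  "index_list S = (SOME xs. set xs = S \<and> distinct xs)"

lemma index_list:
  assumes "finite S"
  shows "set (index_list S) = S" "distinct (index_list S)" "length (index_list S) = card S"
proof -
  have "set (index_list S) = S \<and> distinct (index_list S)"
    unfolding index_list_def by (rule someI_ex) (use finite_distinct_list[OF assms] in auto)
  thus "set (index_list S) = S" "distinct (index_list S)" "length (index_list S) = card S"
    using distinct_card[of "index_list S"] by auto
qed

lemma index_list_bij: "finite S \<Longrightarrow> bij_betw ((!) (index_list S)) {..<card S} S"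
  by (rule bij_betw_nth) (auto simp: index_list)

lemma sum_index_list: "finite S \<Longrightarrow> (\<Sum>w\<in>S. f w) = (\<Sum>j<card S. f (index_list S ! j))"
  by (rule sum.reindex_bij_betw[OF index_list_bij, symmetric])

lemma index_list_nth_in: "finite S \<Longrightarrow> i < card S \<Longrightarrow> index_list S ! i \<in> S"
  using index_list nth_mem by metis

definition index_of :: "'a set \<Rightarrow> 'a \<Rightarrow> nat" where
  "index_of S u = inv_into {..<card S} ((!) (index_list S)) u"

lemma index_of:
  assumes "finite S" "u \<in> S"
  shows "index_of S u < card S" "index_list S ! index_of S u = u"
proof -
  have u: "u \<in> (!) (index_list S) ` {..<card S}"
    using index_list_bij[OF assms(1)] assms(2) by (simp add: bij_betw_def)
  show "index_of S u < card S" unfolding index_of_def using inv_into_into[OF u] by simp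
  show "index_list S ! index_of S u = u" unfolding index_of_def using f_inv_into_f[OF u] by simp
qed

lemma index_of_nth: "finite S \<Longrightarrow> i < card S \<Longrightarrow> index_of S (index_list S ! i) = i"
  using index_list_bij[of S] unfolding index_of_def by (auto simp: bij_betw_def inv_into_f_f)

definition cmat :: "'a set \<Rightarrow> ('a \<Rightarrow> 'a \<Rightarrow> real) \<Rightarrow> complex mat" where
  "cmat S B = mat (card S) (card S) (\<lambda>(i,j). complex_of_real (B (index_list S ! i) (index_list S ! j)))"

lemma cmat_carrier [simp]: "cmat S B \<in> carrier_mat (card S) (card S)"
  and dim_cmat [simp]: "dim_row (cmat S B) = card S" "dim_col (cmat S B) = card S"
  unfolding cmat_def by simp_all

lemma cmat_mult_vec_nth:
  assumes S: "finite S" and v: "v \<in> carrier_vec (card S)" and i: "i < card S"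
  shows "(cmat S B *\<^sub>v v) $ i =
           (\<Sum>w\<in>S. complex_of_real (B (index_list S ! i) w) * v $ index_of S w)"
proof -
  have "(cmat S B *\<^sub>v v) $ i =
          (\<Sum>j<card S. complex_of_real (B (index_list S ! i) (index_list S ! j)) * v $ j)"
    using v i by (simp add: cmat_def scalar_prod_def lessThan_atLeast0)
  also have "\<dots> = (\<Sum>j<card S. complex_of_real (B (index_list S ! i) (index_list S ! j))
                                  * v $ index_of S (index_list S ! j))"
    using S by (intro sum.cong) (simp_all add: index_of_nth)
  also have "\<dots> = (\<Sum>w\<in>S. complex_of_real (B (index_list S ! i) w) * v $ index_of S w)"
    by (rule sum_index_list[OF S, symmetric])
  finally show ?thesis .
qed

lemma eigenvalue_cmat_if_is_eigval:
  assumes S: "finite S" and "is_eigval S B z"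
  shows "eigenvalue (cmat S B) z"
proof -
  obtain x where x0: "\<exists>u\<in>S. x u \<noteq> 0"
    and ev: "\<forall>v\<in>S. (\<Sum>w\<in>S. complex_of_real (B v w) * x w) = z * x v"
    using assms(2) unfolding is_eigval_def by blast
  define v where "v = vec (card S) (\<lambda>i. x (index_list S ! i))"
  have vc: "v \<in> carrier_vec (card S)" unfolding v_def by simp
  have vx: "v $ index_of S w = x w" if "w \<in> S" for w
    using index_of[OF S that] unfolding v_def by simp
  have "v \<noteq> 0\<^sub>v (card S)"
  proof
    assume "v = 0\<^sub>v (card S)"
    moreover obtain u where "u \<in> S" "x u \<noteq> 0" using x0 by blast
    ultimately show False using vx index_of(1)[OF S] by force
  qed
  moreover have "cmat S B *\<^sub>v v = z \<cdot>\<^sub>v v"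
  proof (rule eq_vecI)
    fix i assume "i < dim_vec (z \<cdot>\<^sub>v v)"
    hence i: "i < card S" unfolding v_def by simp
    have "(cmat S B *\<^sub>v v) $ i = (\<Sum>w\<in>S. complex_of_real (B (index_list S ! i) w) * x w)"
      unfolding cmat_mult_vec_nth[OF S vc i] using vx by (intro sum.cong) auto
    also have "\<dots> = (z \<cdot>\<^sub>v v) $ i"
      using ev index_list_nth_in[OF S i] i unfolding v_def by simp
    finally show "(cmat S B *\<^sub>v v) $ i = (z \<cdot>\<^sub>v v) $ i" .
  qed (simp add: v_def cmat_def)
  ultimately show ?thesis
    unfolding eigenvalue_def eigenvector_def using vc by (intro exI[of _ v]) (auto simp: cmat_def)
qed

lemma is_eigval_if_eigenvalue_cmat:
  assumes S: "finite S" and "eigenvalue (cmat S B) z"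
  shows "is_eigval S B z"
proof -
  obtain v where vc: "v \<in> carrier_vec (card S)" and v0: "v \<noteq> 0\<^sub>v (card S)"
    and ev: "cmat S B *\<^sub>v v = z \<cdot>\<^sub>v v"
    using assms(2) unfolding eigenvalue_def eigenvector_def by (auto simp: cmat_def)
  define x where "x u = v $ index_of S u" for u
  have "\<exists>u\<in>S. x u \<noteq> 0"
  proof -
    from v0 vc obtain i where i: "i < card S" "v $ i \<noteq> 0" by (auto simp: vec_eq_iff)
    thus ?thesis using index_of_nth[OF S i(1)] index_list_nth_in[OF S i(1)] unfolding x_def by metis
  qed
  moreover have "(\<Sum>w\<in>S. complex_of_real (B u w) * x w) = z * x u" if u: "u \<in> S" for u
  proof -
    have "(\<Sum>w\<in>S. complex_of_real (B u w) * x w) = (cmat S B *\<^sub>v v) $ index_of S u"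
      using cmat_mult_vec_nth[OF S vc index_of(1)[OF S u]] index_of[OF S u] unfolding x_def by simp
    also have "\<dots> = z * x u" using ev vc index_of[OF S u] unfolding x_def by simp
    finally show ?thesis .
  qed
  ultimately show ?thesis unfolding is_eigval_def by blast
qed

lemma is_eigval_iff_eigenvalue: "finite S \<Longrightarrow> is_eigval S B z \<longleftrightarrow> eigenvalue (cmat S B) z"
  using eigenvalue_cmat_if_is_eigval is_eigval_if_eigenvalue_cmat by blast

lemma finite_eigval_norms: "finite S \<Longrightarrow> finite (cmod ` {z. is_eigval S B z})"
proof -
  assume S: "finite S"
  have "{z. is_eigval S B z} = spectrum (cmat S B)"
    unfolding spectrum_def using is_eigval_iff_eigenvalue[OF S] by auto
  thus ?thesis using card_finite_spectrum(1)[OF cmat_carrier] by (metis finite_imageI)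
qed

lemma eigval_norm_le_spec_rad: "finite S \<Longrightarrow> is_eigval S B z \<Longrightarrow> cmod z \<le> spec_rad S B"
  unfolding spec_rad_eq_Max_eigvals by (rule Max_ge) (auto simp: finite_eigval_norms)

lemma spec_rad_nonneg: "finite S \<Longrightarrow> 0 \<le> spec_rad S B"
  unfolding spec_rad_eq_Max_eigvals by (rule Max_ge) (auto simp: finite_eigval_norms)

lemma spec_rad_attained:
  assumes "finite S"
  shows "spec_rad S B = 0 \<or> (\<exists>z. is_eigval S B z \<and> cmod z = spec_rad S B)"
proof -
  have "spec_rad S B \<in> insert 0 (cmod ` {z. is_eigval S B z})"
    unfolding spec_rad_eq_Max_eigvals by (rule Max_in) (auto simp: finite_eigval_norms assms)
  thus ?thesis by auto
qed

lemma cmat_cong: "\<forall>u\<in>S. \<forall>w\<in>S. P u w = Q u w \<Longrightarrow> finite S \<Longrightarrow> cmat S P = cmat S Q"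
  unfolding cmat_def by (intro eq_matI) (auto simp: index_list_nth_in)

lemma cmat_mmult: assumes S: "finite S" shows "cmat S (mmult S P Q) = cmat S P * cmat S Q"
proof (rule eq_matI)
  fix i j assume "i < dim_row (cmat S P * cmat S Q)" "j < dim_col (cmat S P * cmat S Q)"
  hence ij: "i < card S" "j < card S" by (auto simp: cmat_def)
  have "(cmat S P * cmat S Q) $$ (i,j) =
          (\<Sum>l<card S. complex_of_real (P (index_list S ! i) (index_list S ! l)) *
                       complex_of_real (Q (index_list S ! l) (index_list S ! j)))"
    using ij by (simp add: cmat_def scalar_prod_def lessThan_atLeast0)
  also have "\<dots> = complex_of_real (\<Sum>m\<in>S. P (index_list S ! i) m * Q m (index_list S ! j))"
    unfolding sum_index_list[OF S] by simp
  finally show "cmat S (mmult S P Q) $$ (i, j) = (cmat S P * cmat S Q) $$ (i, j)"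
    using ij by (simp add: cmat_def mmult_def)
qed (auto simp: cmat_def)

lemma cmat_mident: assumes S: "finite S" shows "cmat S mident = 1\<^sub>m (card S)"
proof (rule eq_matI)
  fix i j assume "i < dim_row (1\<^sub>m (card S) :: complex mat)" "j < dim_col (1\<^sub>m (card S) :: complex mat)"
  hence ij: "i < card S" "j < card S" by auto
  have "(index_list S ! i = index_list S ! j) = (i = j)"
    using index_list[OF S] ij by (simp add: nth_eq_iff_index_eq)
  thus "cmat S mident $$ (i, j) = 1\<^sub>m (card S) $$ (i, j)" using ij by (simp add: cmat_def mident_def)
qed (auto simp: cmat_def)

lemma cmat_mpow: assumes S: "finite S" shows "cmat S (mpow S B n) = cmat S B ^\<^sub>m n"
proof (induction n)
  case 0 thus ?case using cmat_mident[OF S] by (simp add: cmat_def)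
next
  case (Suc n)
  have "cmat S (mpow S B (Suc n)) = cmat S (mmult S (mpow S B n) B)"
    using mpow_Suc_right[OF S] S by (intro cmat_cong) auto
  also have "\<dots> = cmat S B ^\<^sub>m n * cmat S B" using Suc cmat_mmult[OF S] by simp
  finally show ?case by simp
qed

lemma mpow_bounded_if_eigvals_lt_1:
  assumes S: "finite S" and lt: "\<And>z. is_eigval S B z \<Longrightarrow> cmod z < 1"
  shows "\<exists>c. \<forall>n. \<forall>u\<in>S. \<forall>w\<in>S. \<bar>mpow S B n u w\<bar> \<le> c"
proof (cases "S = {}")
  case False
  hence cS: "0 < card S" using S card_gt_0_iff by blast
  have "spectral_radius (cmat S B) < 1"
  proof -
    have "finite (norm ` spectrum (cmat S B))" using card_finite_spectrum(1)[OF cmat_carrier] by blast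
    moreover have "norm ` spectrum (cmat S B) \<noteq> {}" using spectrum_non_empty[OF cmat_carrier cS] by blast
    moreover have "\<forall>a\<in>norm ` spectrum (cmat S B). a < 1"
      using lt is_eigval_iff_eigenvalue[OF S] unfolding spectrum_def by auto
    ultimately show ?thesis unfolding spectral_radius_def by simp
  qed
  then obtain c where c: "\<forall>n. norm_bound (cmat S B ^\<^sub>m n) c"
    using spectral_radius_jnf_norm_bound_less_1_upper_triangular[OF cmat_carrier] by blast
  have "\<bar>mpow S B n u w\<bar> \<le> c" if uw: "u \<in> S" "w \<in> S" for n u w
  proof -
    have "(cmat S B ^\<^sub>m n) $$ (index_of S u, index_of S w) = complex_of_real (mpow S B n u w)"
      using index_of[OF S uw(1)] index_of[OF S uw(2)]
      unfolding cmat_mpow[OF S, symmetric] by (simp add: cmat_def)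
    moreover have "norm ((cmat S B ^\<^sub>m n) $$ (index_of S u, index_of S w)) \<le> c"
      using c index_of[OF S uw(1)] index_of[OF S uw(2)] unfolding norm_bound_def by (simp add: cmat_def)
    ultimately show ?thesis by simp
  qed
  thus ?thesis by blast
qed simp

lemma eigval_norm_le_supervec:
  assumes S: "finite S" and B: "\<forall>u\<in>S. \<forall>w\<in>S. 0 \<le> B u w"
    and x: "\<forall>u\<in>S. 0 < x u" and le: "\<forall>u\<in>S. mvmult S B x u \<le> r * x u"
    and z: "is_eigval S B z"
  shows "cmod z \<le> r"
proof -
  obtain y where y0: "\<exists>u\<in>S. y u \<noteq> 0"
    and ev: "\<forall>v\<in>S. (\<Sum>w\<in>S. complex_of_real (B v w) * y w) = z * y v"
    using z unfolding is_eigval_def by blast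
  \<comment> \<open>compare |y| with its smallest multiple m x dominating it; equality holds at u0\<close>
  define f where "f u = cmod (y u) / x u" for u
  define m where "m = Max (f ` S)"
  have "S \<noteq> {}" using y0 by blast
  hence "m \<in> f ` S" unfolding m_def using S by (intro Max_in) auto
  then obtain u0 where u0: "u0 \<in> S" "f u0 = m" by auto
  have yle: "cmod (y w) \<le> m * x w" if "w \<in> S" for w
  proof -
    have "f w \<le> m" unfolding m_def using S that by (intro Max_ge) auto
    thus ?thesis using x that unfolding f_def by (simp add: pos_divide_le_eq)
  qed
  have yu0: "cmod (y u0) = m * x u0" using u0 x unfolding f_def by auto
  have m0: "0 \<le> m" using u0 x unfolding f_def by auto
  have ypos: "0 < cmod (y u0)"
  proof (rule ccontr)
    assume "\<not> 0 < cmod (y u0)"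
    moreover have "0 < x u0" using x u0 by blast
    ultimately have "m = 0" using yu0 m0 by (auto simp: zero_less_mult_iff)
    hence "y w = 0" if "w \<in> S" for w using yle[OF that] by simp
    with y0 show False by blast
  qed
  have "cmod z * cmod (y u0) = cmod (\<Sum>w\<in>S. complex_of_real (B u0 w) * y w)"
    using ev u0 by (simp add: norm_mult)
  also have "\<dots> \<le> (\<Sum>w\<in>S. B u0 w * cmod (y w))"
    using norm_sum[of "\<lambda>w. complex_of_real (B u0 w) * y w" S] B u0 by (simp add: norm_mult)
  also have "\<dots> \<le> (\<Sum>w\<in>S. B u0 w * (m * x w))"
    using B u0 yle by (intro sum_mono mult_left_mono) auto
  also have "\<dots> = m * mvmult S B x u0" unfolding mvmult_def by (simp add: sum_distrib_left algebra_simps)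
  also have "\<dots> \<le> m * (r * x u0)" using le u0 m0 by (intro mult_left_mono) auto
  also have "\<dots> = r * cmod (y u0)" using yu0 by simp
  finally show "cmod z \<le> r" using ypos by simp
qed

lemma spec_rad_le_supervec:
  assumes S: "finite S" "S \<noteq> {}" and B: "\<forall>u\<in>S. \<forall>w\<in>S. 0 \<le> B u w"
    and x: "\<forall>u\<in>S. 0 < x u" and le: "\<forall>u\<in>S. mvmult S B x u \<le> r * x u"
  shows "spec_rad S B \<le> r"
proof -
  obtain u1 where u1: "u1 \<in> S" using S by auto
  have "0 \<le> mvmult S B x u1" using B x u1 by (intro mvmult_nonneg) (auto intro: less_imp_le)
  hence "0 \<le> r * x u1" using le u1 by force
  moreover have "0 < x u1" using x u1 by blast
  ultimately have "0 \<le> r" by (auto simp: zero_le_mult_iff)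
  thus ?thesis
    using spec_rad_attained[OF S(1), of B] eigval_norm_le_supervec[OF S(1) B x le] by force
qed

lemma spec_rad_le_supervec_subset:
  assumes W: "finite W" "D \<subseteq> W" "D \<noteq> {}" and B: "\<forall>u\<in>W. \<forall>w\<in>W. 0 \<le> B u w"
    and x: "\<forall>u\<in>W. 0 < x u" and le: "\<forall>u\<in>D. mvmult W B x u \<le> r * x u"
  shows "spec_rad D B \<le> r"
proof (rule spec_rad_le_supervec[OF finite_subset[OF W(2,1)] W(3)])
  show "\<forall>u\<in>D. mvmult D B x u \<le> r * x u"
  proof
    fix u assume u: "u \<in> D"
    have "u \<in> W" using W(2) u by blast
    hence "0 \<le> B u w * x w" if "w \<in> W" for w using B x that by (simp add: less_imp_le)
    hence "mvmult D B x u \<le> mvmult W B x u" unfolding mvmult_def using W by (intro sum_mono2) auto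
    thus "mvmult D B x u \<le> r * x u" using le u by auto
  qed
qed (use W B x in auto)

lemma eigval_norm_lt_1_divide:
  assumes S: "finite S" and t: "spec_rad S B < t" and l: "is_eigval S (\<lambda>u w. B u w / t) l"
  shows "cmod l < 1"
proof -
  have t0: "0 < t" using t spec_rad_nonneg[OF S, of B] by linarith
  have "cmod (l * complex_of_real t) \<le> spec_rad S B"
    using is_eigval_divide[OF l] t0 eigval_norm_le_spec_rad[OF S] by simp
  hence "cmod l * t \<le> spec_rad S B" using t0 by (simp add: norm_mult)
  hence "cmod l * t < 1 * t" using t by linarith
  thus ?thesis using mult_less_cancel_right_pos[OF t0] by blast
qed

lemma mvmult_mpow_ge_subvec:
  assumes B: "\<forall>u\<in>S. \<forall>w\<in>S. 0 \<le> B u w" and t: "0 \<le> t" and S: "finite S"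
    and ge: "\<forall>u\<in>S. t * x u \<le> mvmult S B x u"
  shows "\<forall>u\<in>S. t ^ n * x u \<le> mvmult S (mpow S B n) x u"
proof (induction n)
  case 0 thus ?case using S by (simp add: mvmult_mident)
next
  case (Suc n)
  show ?case
  proof
    fix u assume u: "u \<in> S"
    have "t ^ Suc n * x u = t ^ n * (t * x u)" by simp
    also have "\<dots> \<le> t ^ n * mvmult S B x u" using ge u t by (intro mult_left_mono) auto
    also have "\<dots> = mvmult S B (\<lambda>w. t ^ n * x w) u" by (simp add: mvmult_cmult)
    also have "\<dots> \<le> mvmult S B (mvmult S (mpow S B n) x) u" using Suc B u by (intro mvmult_mono) auto
    also have "\<dots> = mvmult S (mpow S B (Suc n)) x u" by (simp add: mvmult_mmult)
    finally show "t ^ Suc n * x u \<le> mvmult S (mpow S B (Suc n)) x u" .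
  qed
qed

lemma spec_rad_ge_subvec:
  assumes S: "finite S" and B: "\<forall>u\<in>S. \<forall>w\<in>S. 0 \<le> B u w"
    and x: "\<forall>u\<in>S. 0 \<le> x u" and u0: "u0 \<in> S" "0 < x u0"
    and ge: "\<forall>u\<in>S. t * x u \<le> mvmult S B x u"
  shows "t \<le> spec_rad S B"
proof (rule ccontr)
  let ?r = "spec_rad S B"
  assume "\<not> t \<le> ?r"
  define t' where "t' = (?r + t) / 2"
  have t': "?r < t'" "t' < t" "0 < t'"
    using \<open>\<not> t \<le> ?r\<close> spec_rad_nonneg[OF S, of B] unfolding t'_def by auto
  define B' where "B' = (\<lambda>u w. B u w / t')"
  \<comment> \<open>the powers of B' stay bounded, yet x forces them to grow like (t/t')^n\<close>
  obtain c where c: "\<forall>n. \<forall>u\<in>S. \<forall>w\<in>S. \<bar>mpow S B' n u w\<bar> \<le> c"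
    using mpow_bounded_if_eigvals_lt_1[OF S] eigval_norm_lt_1_divide[OF S t'(1)] unfolding B'_def by blast
  have "(t/t') * x u \<le> mvmult S B' x u" if u: "u \<in> S" for u
  proof -
    have "(t/t') * x u = (t * x u) / t'" by simp
    also have "\<dots> \<le> mvmult S B x u / t'" using ge u t' by (intro divide_right_mono) auto
    also have "\<dots> = mvmult S B' x u" unfolding mvmult_def B'_def by (simp add: sum_divide_distrib)
    finally show ?thesis .
  qed
  hence grow: "\<forall>u\<in>S. (t/t')^n * x u \<le> mvmult S (mpow S B' n) x u" for n
    using mvmult_mpow_ge_subvec[of S B' "t/t'" x] B t' S unfolding B'_def by simp
  have bnd: "(t/t')^n \<le> c * (\<Sum>w\<in>S. x w) / x u0" for n
  proof -
    have "(t/t')^n * x u0 \<le> mvmult S (mpow S B' n) x u0" using grow u0 by blast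
    also have "\<dots> \<le> (\<Sum>w\<in>S. c * x w)"
      unfolding mvmult_def using c u0 x by (intro sum_mono mult_right_mono) (auto dest: abs_le_D1)
    also have "\<dots> = c * (\<Sum>w\<in>S. x w)" by (simp add: sum_distrib_left)
    finally show ?thesis using u0 by (simp add: pos_le_divide_eq)
  qed
  have "1 < t/t'" using t' by simp
  from real_arch_pow[OF this] obtain n where "c * (\<Sum>w\<in>S. x w) / x u0 < (t/t')^n" by blast
  with bnd[of n] show False by simp
qed

lemma spec_rad_ge_of_subset:
  assumes S: "finite S" "D \<subseteq> S" and B: "\<forall>u\<in>S. \<forall>w\<in>S. 0 \<le> B u w"
    and x: "\<forall>u\<in>D. 0 \<le> x u" and u0: "u0 \<in> D" "0 < x u0"
    and ge: "\<forall>u\<in>D. t * x u \<le> mvmult D B x u"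
  shows "t \<le> spec_rad S B"
proof (rule spec_rad_ge_subvec[OF S(1) B, of "\<lambda>w. if w \<in> D then x w else 0" u0])
  show "\<forall>u\<in>S. t * (if u \<in> D then x u else 0) \<le> mvmult S B (\<lambda>w. if w \<in> D then x w else 0) u"
  proof
    fix u assume u: "u \<in> S"
    have "0 \<le> mvmult S B (\<lambda>w. if w \<in> D then x w else 0) u"
      using B x u by (intro mvmult_nonneg) auto
    thus "t * (if u \<in> D then x u else 0) \<le> mvmult S B (\<lambda>w. if w \<in> D then x w else 0) u"
      using ge unfolding mvmult_extend_zero[OF S(2,1)] by auto
  qed
qed (use x u0 S in auto)

lemma spec_rad_zero:
  assumes "finite S" "\<forall>u\<in>S. \<forall>w\<in>S. B u w = 0"
  shows "spec_rad S B = 0"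
proof (cases "S = {}")
  case True thus ?thesis unfolding spec_rad_eq_Max_eigvals is_eigval_def by simp
next
  case False
  have "spec_rad S B \<le> 0"
    by (rule spec_rad_le_supervec[where x="\<lambda>_. 1"]) (use assms False in \<open>auto simp: mvmult_def\<close>)
  thus ?thesis using spec_rad_nonneg[OF assms(1), of B] by simp
qed

lemma nonneg_subeigvec:
  assumes S: "finite S" and B: "\<forall>u\<in>S. \<forall>w\<in>S. 0 \<le> B u w" and r0: "0 < spec_rad S B"
  shows "\<exists>x. (\<forall>u\<in>S. 0 \<le> x u) \<and> (\<exists>u\<in>S. 0 < x u) \<and> (\<forall>u\<in>S. spec_rad S B * x u \<le> mvmult S B x u)"
proof -
  let ?r = "spec_rad S B"
  obtain z where z: "is_eigval S B z" "cmod z = ?r" using spec_rad_attained[OF S, of B] r0 by auto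
  then obtain y where y0: "\<exists>u\<in>S. y u \<noteq> 0"
      and ev: "\<forall>v\<in>S. (\<Sum>w\<in>S. complex_of_real (B v w) * y w) = z * y v"
    unfolding is_eigval_def by blast
  have "?r * cmod (y u) \<le> mvmult S B (\<lambda>w. cmod (y w)) u" if u: "u \<in> S" for u
  proof -
    have "?r * cmod (y u) = cmod (\<Sum>w\<in>S. complex_of_real (B u w) * y w)"
      using ev u z(2) by (simp add: norm_mult)
    also have "\<dots> \<le> mvmult S B (\<lambda>w. cmod (y w)) u"
      using norm_sum[of "\<lambda>w. complex_of_real (B u w) * y w" S] B u
      by (simp add: mvmult_def norm_mult)
    finally show ?thesis .
  qed
  moreover have "\<exists>u\<in>S. 0 < cmod (y u)" using y0 by auto
  ultimately show ?thesis by (intro exI[of _ "\<lambda>w. cmod (y w)"]) auto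
qed

lemma char_matrix_cmat_invertible:
  assumes S: "finite S" and rho: "spec_rad S X < \<Phi>"
  obtains M where "M \<in> carrier_mat (card S) (card S)"
    "char_matrix (cmat S X) (complex_of_real \<Phi>) * M = 1\<^sub>m (card S)"
proof -
  let ?n = "card S" and ?X = "cmat S X"
  define N where "N = char_matrix ?X (complex_of_real \<Phi>)"
  have Nc: "N \<in> carrier_mat ?n ?n" unfolding N_def by simp
  have "\<not> eigenvalue ?X (complex_of_real \<Phi>)"
  proof
    assume "eigenvalue ?X (complex_of_real \<Phi>)"
    hence "cmod (complex_of_real \<Phi>) \<le> spec_rad S X"
      using eigval_norm_le_spec_rad[OF S] is_eigval_iff_eigenvalue[OF S] by blast
    thus False using rho spec_rad_nonneg[OF S, of X] by simp
  qed
  hence "det N \<noteq> 0"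
    using det_0_iff_vec_prod_zero_field[OF Nc] eigenvalue_char_matrix[OF cmat_carrier, of S X]
    unfolding N_def by blast
  from det_non_zero_imp_unit[OF Nc this, of "()"] show ?thesis
    using that unfolding Units_def ring_mat_def N_def by auto
qed

lemma resolvent_solvable:
  assumes S: "finite S" and rho: "spec_rad S X < \<Phi>"
  shows "\<exists>u. \<forall>v\<in>S. \<Phi> * u v - mvmult S X u v = b v"
proof -
  let ?n = "card S" and ?X = "cmat S X"
  define N where "N = char_matrix ?X (complex_of_real \<Phi>)"
  have Nc: "N \<in> carrier_mat ?n ?n" unfolding N_def by simp
  obtain M where M: "M \<in> carrier_mat ?n ?n" "N * M = 1\<^sub>m ?n"
    using char_matrix_cmat_invertible[OF S rho] unfolding N_def by blast
  define bv where "bv = vec ?n (\<lambda>i. - complex_of_real (b (index_list S ! i)))"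
  define w where "w = M *\<^sub>v bv"
  have wc: "w \<in> carrier_vec ?n" unfolding w_def using M(1) by (simp add: bv_def)
  have "N *\<^sub>v w = bv"
    using assoc_mult_mat_vec[OF Nc M(1), of bv] M(2) unfolding w_def by (simp add: bv_def)
  moreover have "N *\<^sub>v w = ?X *\<^sub>v w + (- complex_of_real \<Phi>) \<cdot>\<^sub>v w"
    unfolding N_def
    by (rule eq_vecI)
      (use wc in \<open>auto simp: char_matrix_def add_scalar_prod_distrib[of _ ?n]\<close>)
  ultimately have Nw: "?X *\<^sub>v w + (- complex_of_real \<Phi>) \<cdot>\<^sub>v w = bv" by simp
  show ?thesis
  proof (intro exI[of _ "\<lambda>v. Re (w $ index_of S v)"] ballI)
    fix v assume v: "v \<in> S"
    note i = index_of[OF S v]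
    have "(?X *\<^sub>v w) $ index_of S v + (- complex_of_real \<Phi>) * w $ index_of S v = - complex_of_real (b v)"
      using arg_cong[OF Nw, of "\<lambda>y. y $ index_of S v"] wc i by (simp add: bv_def)
    from arg_cong[OF this, of Re]
    have "Re ((?X *\<^sub>v w) $ index_of S v) - \<Phi> * Re (w $ index_of S v) = - b v" by simp
    moreover have "Re ((?X *\<^sub>v w) $ index_of S v) = mvmult S X (\<lambda>v. Re (w $ index_of S v)) v"
      using cmat_mult_vec_nth[OF S wc i(1)] i(2) by (simp add: mvmult_def)
    ultimately show "\<Phi> * Re (w $ index_of S v) - mvmult S X (\<lambda>v. Re (w $ index_of S v)) v = b v"
      by linarith
  qed
qed

lemma resolvent_solution_nonneg:
  assumes S: "finite S" and X: "\<forall>u\<in>S. \<forall>w\<in>S. 0 \<le> X u w" and rho: "spec_rad S X < \<Phi>"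
    and sol: "\<forall>m\<in>S. \<Phi> * u m - mvmult S X u m = b m" and b: "\<forall>m\<in>S. 0 \<le> b m"
  shows "\<forall>m\<in>S. 0 \<le> u m"
proof (rule ccontr)
  assume "\<not> ?thesis"
  then obtain m0 where m0: "m0 \<in> S" "u m0 < 0" by force
  \<comment> \<open>otherwise the negative part of u is a subeigenvector of X for \<Phi>\<close>
  define ng where "ng m = max 0 (- u m)" for m
  have "\<Phi> * ng m \<le> mvmult S X ng m" if m: "m \<in> S" for m
  proof (cases "0 \<le> u m")
    case True
    thus ?thesis using mvmult_nonneg[of S X m ng] X m unfolding ng_def by simp
  next
    case False
    hence "\<Phi> * ng m = - (b m + mvmult S X u m)" using sol m unfolding ng_def by (simp add: algebra_simps)
    also have "\<dots> \<le> mvmult S X (\<lambda>w. (-1) * u w) m"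
      using b m mvmult_cmult[of S X "-1" u m] by simp
    also have "\<dots> \<le> mvmult S X ng m" using X m by (intro mvmult_mono) (auto simp: ng_def)
    finally show ?thesis .
  qed
  hence "\<Phi> \<le> spec_rad S X"
    using spec_rad_ge_subvec[OF S X, of ng m0] m0 unfolding ng_def by auto
  thus False using rho by simp
qed

lemma perron_spec_rad_pos:
  assumes S: "finite S" "S \<noteq> {}" and P: "\<forall>u\<in>S. \<forall>w\<in>S. 0 < P u w"
  shows "0 < spec_rad S P"
proof -
  obtain u0 where u0: "u0 \<in> S" using S by auto
  define p where "p = Min ((\<lambda>(u,w). P u w) ` (S \<times> S))"
  have p: "p \<le> P u w" if "u \<in> S" "w \<in> S" for u w
    unfolding p_def using S that by (intro Min_le) auto
  have "p \<in> (\<lambda>(u,w). P u w) ` (S \<times> S)" unfolding p_def using S by (intro Min_in) auto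
  hence p0: "0 < p" using P by auto
  have "p * 1 \<le> mvmult S P (\<lambda>_. 1) u" if u: "u \<in> S" for u
  proof -
    have "p \<le> P u u" using p u by blast
    also have "\<dots> \<le> (\<Sum>w\<in>S. P u w)" using S u P by (intro member_le_sum) (auto intro: less_imp_le)
    finally show ?thesis unfolding mvmult_def by simp
  qed
  hence "p \<le> spec_rad S P"
    using spec_rad_ge_subvec[OF S(1), of P "\<lambda>_. 1" u0 p] P u0 by (auto intro: less_imp_le)
  thus ?thesis using p0 by simp
qed

lemma perron_subeigvec_is_eigvec:
  assumes S: "finite S" and P: "\<forall>u\<in>S. \<forall>w\<in>S. 0 < P u w"
    and x: "\<forall>u\<in>S. 0 \<le> x u" and w0: "w0 \<in> S" "0 < x w0"
    and sub: "\<forall>u\<in>S. spec_rad S P * x u \<le> mvmult S P x u"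
  shows "\<forall>u\<in>S. mvmult S P x u = spec_rad S P * x u"
proof (rule ccontr)
  let ?r = "spec_rad S P"
  assume "\<not> ?thesis"
  then obtain u1 where u1: "u1 \<in> S" "mvmult S P x u1 \<noteq> ?r * x u1" by blast
  have P0: "\<forall>u\<in>S. \<forall>w\<in>S. 0 \<le> P u w" using P by (auto intro: less_imp_le)
  \<comment> \<open>applying P once more turns the defect into a strict one everywhere\<close>
  define x1 where "x1 = mvmult S P x"
  have x1p: "0 < x1 u" if "u \<in> S" for u unfolding x1_def by (rule mvmult_pos[OF S P x w0 that])
  have gap: "?r * x1 u < mvmult S P x1 u" if u: "u \<in> S" for u
  proof -
    have "mvmult S P x1 u - ?r * x1 u = mvmult S P (\<lambda>w. mvmult S P x w - ?r * x w) u"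
      unfolding x1_def by (simp add: mvmult_cmult mvmult_diff)
    also have "\<dots> > 0"
      using sub u1 by (intro mvmult_pos[OF S P _ u1(1) _ u]) (auto simp: less_le)
    finally show ?thesis by simp
  qed
  define q where "q u = mvmult S P x1 u / x1 u" for u
  define e where "e = Min (q ` S)"
  have "e \<in> q ` S" unfolding e_def using S w0 by (intro Min_in) auto
  then obtain u2 where u2: "u2 \<in> S" "e = q u2" by auto
  have "?r < e" using gap[OF u2(1)] x1p[OF u2(1)] u2 unfolding q_def by (simp add: pos_less_divide_eq)
  moreover have "e * x1 u \<le> mvmult S P x1 u" if u: "u \<in> S" for u
  proof -
    have "e \<le> q u" unfolding e_def using S u by (intro Min_le) auto
    thus ?thesis using x1p[OF u] unfolding q_def by (simp add: pos_le_divide_eq)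
  qed
  hence "e \<le> ?r"
    using spec_rad_ge_subvec[OF S P0, of x1 u2 e] x1p u2(1) by (auto intro: less_imp_le)
  ultimately show False by simp
qed

lemma pos_eigvec_eigenspace_dim1:
  assumes S: "finite S" "S \<noteq> {}" and P: "\<forall>u\<in>S. \<forall>w\<in>S. 0 < P u w"
    and x: "\<forall>u\<in>S. 0 < x u" and xev: "\<forall>u\<in>S. mvmult S P x u = r * x u"
    and yev: "\<forall>u\<in>S. mvmult S P y u = r * y u"
  shows "\<exists>c. \<forall>u\<in>S. y u = c * x u"
proof -
  define f where "f u = y u / x u" for u
  define c where "c = Max (f ` S)"
  have "c \<in> f ` S" unfolding c_def using S by (intro Max_in) auto
  then obtain u2 where u2: "u2 \<in> S" "c = f u2" by auto
  \<comment> \<open>c x - y is a nonnegative eigenvector vanishing at u2, hence zero\<close>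
  define w where "w u = c * x u - y u" for u
  have w0: "\<forall>u\<in>S. 0 \<le> w u"
  proof
    fix u assume u: "u \<in> S"
    have "f u \<le> c" unfolding c_def using S u by (intro Max_ge) auto
    thus "0 \<le> w u" using x u unfolding w_def f_def by (simp add: pos_divide_le_eq)
  qed
  have wu2: "w u2 = 0" using u2 x unfolding w_def f_def by auto
  have wev: "mvmult S P w u = r * w u" if "u \<in> S" for u
    using xev yev that unfolding w_def by (simp add: mvmult_diff mvmult_cmult algebra_simps)
  have "\<forall>u\<in>S. w u = 0"
  proof (rule ccontr)
    assume "\<not> ?thesis"
    then obtain u3 where "u3 \<in> S" "0 < w u3" using w0 by force
    hence "0 < mvmult S P w u2" by (rule mvmult_pos[OF S(1) P w0 _ _ u2(1)])
    thus False using wev[OF u2(1)] wu2 by simp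
  qed
  thus ?thesis unfolding w_def by (intro exI[of _ c]) auto
qed

lemma perron_eigvec:
  assumes S: "finite S" "S \<noteq> {}" and P: "\<forall>u\<in>S. \<forall>w\<in>S. 0 < P u w"
  shows "\<exists>x. (\<forall>u\<in>S. 0 < x u) \<and> (\<forall>u\<in>S. mvmult S P x u = spec_rad S P * x u)"
proof -
  have P0: "\<forall>u\<in>S. \<forall>w\<in>S. 0 \<le> P u w" using P by (auto intro: less_imp_le)
  obtain x where x: "\<forall>u\<in>S. 0 \<le> x u" "\<exists>u\<in>S. 0 < x u" "\<forall>u\<in>S. spec_rad S P * x u \<le> mvmult S P x u"
    using nonneg_subeigvec[OF S(1) P0 perron_spec_rad_pos[OF S P]] by blast
  obtain w0 where w0: "w0 \<in> S" "0 < x w0" using x(2) by blast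
  have ev: "\<forall>u\<in>S. mvmult S P x u = spec_rad S P * x u"
    by (rule perron_subeigvec_is_eigvec[OF S(1) P x(1) w0 x(3)])
  have "0 < x u" if "u \<in> S" for u
    using mvmult_pos[OF S(1) P x(1) w0 that] ev that perron_spec_rad_pos[OF S P]
    by (simp add: zero_less_mult_iff)
  thus ?thesis using ev by blast
qed

text \<open>Commuting nonnegative matrices leave the one-dimensional Perron eigenspace invariant, so they
  share the Perron eigenvector; its eigenvalue for each of them is forced to be their spectral radius.\<close>

lemma common_perron_eigvec:
  assumes S: "finite S" "S \<noteq> {}"
    and P: "\<forall>u\<in>S. \<forall>w\<in>S. 0 < P u w"
    and M: "\<forall>i\<in>I. \<forall>u\<in>S. \<forall>w\<in>S. 0 \<le> M i u w"
    and comm: "\<forall>i\<in>I. \<forall>y. \<forall>u\<in>S. mvmult S P (mvmult S (M i) y) u = mvmult S (M i) (mvmult S P y) u"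
  shows "\<exists>x. (\<forall>u\<in>S. 0 < x u) \<and> (\<forall>u\<in>S. mvmult S P x u = spec_rad S P * x u)
           \<and> (\<forall>i\<in>I. \<forall>u\<in>S. mvmult S (M i) x u = spec_rad S (M i) * x u)"
proof -
  let ?r = "spec_rad S P"
  obtain x where xp: "\<forall>u\<in>S. 0 < x u" and ev: "\<forall>u\<in>S. mvmult S P x u = ?r * x u"
    using perron_eigvec[OF S P] by blast
  obtain u0 where u0: "u0 \<in> S" using S by auto
  have "mvmult S (M i) x u = spec_rad S (M i) * x u" if i: "i \<in> I" and u: "u \<in> S" for i u
  proof -
    have "\<forall>u\<in>S. mvmult S P (mvmult S (M i) x) u = ?r * mvmult S (M i) x u"
      using comm i ev by (simp add: mvmult_cong[of S _ "\<lambda>w. ?r * x w"] mvmult_cmult)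
    then obtain c where c: "\<forall>u\<in>S. mvmult S (M i) x u = c * x u"
      using pos_eigvec_eigenspace_dim1[OF S P xp ev] by blast
    have "0 \<le> mvmult S (M i) x u0" using M i u0 xp by (intro mvmult_nonneg) (auto intro: less_imp_le)
    hence "0 \<le> c * x u0" using c u0 by simp
    moreover have "0 < x u0" using xp u0 by blast
    ultimately have c0: "0 \<le> c" by (auto simp: zero_le_mult_iff)
    have "spec_rad S (M i) \<le> c" using spec_rad_le_supervec[OF S _ xp] M i c by auto
    moreover have "c \<le> spec_rad S (M i)"
      using eigval_norm_le_spec_rad[OF S(1) is_eigval_of_real_eigvec[of S x "M i" c]] xp u0 c c0
      by fastforce
    ultimately show ?thesis using c u by simp
  qed
  thus ?thesis using xp ev by blast
qed

definition nonneg_mat :: "('a \<Rightarrow> 'a \<Rightarrow> real) \<Rightarrow> bool" where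
  "nonneg_mat B \<longleftrightarrow> (\<forall>u w. 0 \<le> B u w)"

definition commute_on :: "'a set \<Rightarrow> ('a \<Rightarrow> 'a \<Rightarrow> real) \<Rightarrow> ('a \<Rightarrow> 'a \<Rightarrow> real) \<Rightarrow> bool" where
  "commute_on V B C \<longleftrightarrow> (\<forall>u\<in>V. \<forall>w\<in>V. mmult V B C u w = mmult V C B u w)"

lemma nonneg_mat_mident: "nonneg_mat mident"
  unfolding nonneg_mat_def mident_def by auto

lemma nonneg_mat_mmult: "nonneg_mat B \<Longrightarrow> nonneg_mat C \<Longrightarrow> nonneg_mat (mmult V B C)"
  unfolding nonneg_mat_def mmult_def by (auto intro!: sum_nonneg)

lemma nonneg_mat_mpow: "nonneg_mat B \<Longrightarrow> nonneg_mat (mpow V B n)"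
  by (induction n) (auto simp: nonneg_mat_mident nonneg_mat_mmult)

lemma mmult_cong:
  "\<forall>m\<in>V. X u m = X' u m \<Longrightarrow> \<forall>m\<in>V. Y m w = Y' m w \<Longrightarrow> mmult V X Y u w = mmult V X' Y' u w"
  unfolding mmult_def by (intro sum.cong) auto

lemma mmult_sum_left: "mmult V (\<lambda>u w. \<Sum>j\<in>J. C j u w) B u w = (\<Sum>j\<in>J. mmult V (C j) B u w)"
  unfolding mmult_def by (simp add: sum_distrib_right) (rule sum.swap)

lemma mmult_sum_right: "mmult V B (\<lambda>u w. \<Sum>j\<in>J. C j u w) u w = (\<Sum>j\<in>J. mmult V B (C j) u w)"
  unfolding mmult_def by (simp add: sum_distrib_left) (rule sum.swap)

lemma commute_on_mident: "finite V \<Longrightarrow> commute_on V B mident"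
  unfolding commute_on_def using mmult_mident_left mmult_mident_right by metis

lemma commute_on_mmult:
  assumes "commute_on V B C1" "commute_on V B C2"
  shows "commute_on V B (mmult V C1 C2)"
  unfolding commute_on_def
proof (intro ballI)
  fix u w assume uw: "u \<in> V" "w \<in> V"
  have "mmult V B (mmult V C1 C2) u w = mmult V (mmult V B C1) C2 u w" by (simp add: mmult_assoc)
  also have "\<dots> = mmult V (mmult V C1 B) C2 u w"
    using assms(1) uw unfolding commute_on_def by (intro mmult_cong) auto
  also have "\<dots> = mmult V C1 (mmult V B C2) u w" by (simp add: mmult_assoc)
  also have "\<dots> = mmult V C1 (mmult V C2 B) u w"
    using assms(2) uw unfolding commute_on_def by (intro mmult_cong) auto
  also have "\<dots> = mmult V (mmult V C1 C2) B u w" by (simp add: mmult_assoc)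
  finally show "mmult V B (mmult V C1 C2) u w = mmult V (mmult V C1 C2) B u w" .
qed

lemma commute_on_mpow: "finite V \<Longrightarrow> commute_on V B C \<Longrightarrow> commute_on V B (mpow V C n)"
  by (induction n) (auto simp: commute_on_mident commute_on_mmult)

lemma commute_on_sum: "\<forall>j\<in>J. commute_on V B (C j) \<Longrightarrow> commute_on V B (\<lambda>u w. \<Sum>j\<in>J. C j u w)"
  unfolding commute_on_def by (simp add: mmult_sum_left mmult_sum_right)

section \<open>Paths and components of a finite k-graph\<close>

definition proper_path :: "'a kgraph \<Rightarrow> 'a \<Rightarrow> 'a \<Rightarrow> bool" where
  "proper_path L v w \<longleftrightarrow> (\<exists>l\<in>paths L. deg L l \<noteq> (\<lambda>_. 0) \<and> rng L l = v \<and> src L l = w)"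

definition path_supported :: "'a kgraph \<Rightarrow> ('a \<Rightarrow> 'a \<Rightarrow> real) \<Rightarrow> bool" where
  "path_supported L B \<longleftrightarrow> (\<forall>u\<in>vertices L. \<forall>w\<in>vertices L. B u w \<noteq> 0 \<longrightarrow> path_between L u w)"

locale fin_kgraph =
  fixes k :: nat and L :: "'a kgraph"
  assumes kgraph: "is_kgraph k L" and finite: "finite_kgraph k L"
begin

abbreviation "P \<equiv> paths L"
abbreviation "V \<equiv> vertices L"
abbreviation "A \<equiv> vmat L"

lemma k_pos: "1 \<le> k"
  using kgraph unfolding is_kgraph_def by simp

lemma rng_src_in: "l \<in> P \<Longrightarrow> rng L l \<in> P \<and> src L l \<in> P"
  using kgraph unfolding is_kgraph_def by simp

lemma rng_src_idem: "l \<in> P \<Longrightarrow> rng L (rng L l) = rng L l \<and> src L (rng L l) = rng L l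
                  \<and> rng L (src L l) = src L l \<and> src L (src L l) = src L l"
  using kgraph unfolding is_kgraph_def by simp

lemma cmp_in: "l \<in> P \<Longrightarrow> m \<in> P \<Longrightarrow> src L l = rng L m \<Longrightarrow>
    cmp L l m \<in> P \<and> rng L (cmp L l m) = rng L l \<and> src L (cmp L l m) = src L m"
  using kgraph unfolding is_kgraph_def by simp

lemma cmp_units: "l \<in> P \<Longrightarrow> cmp L (rng L l) l = l \<and> cmp L l (src L l) = l"
  using kgraph unfolding is_kgraph_def by simp

lemma deg_in_Nk: "l \<in> P \<Longrightarrow> in_Nk k (deg L l)"
  using kgraph unfolding is_kgraph_def by simp

lemma deg_cmp: "l \<in> P \<Longrightarrow> m \<in> P \<Longrightarrow> src L l = rng L m \<Longrightarrow>
    deg L (cmp L l m) = (\<lambda>i. deg L l i + deg L m i)"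
  using kgraph unfolding is_kgraph_def by blast

lemma unique_factorisation: "l \<in> P \<Longrightarrow> deg L l = (\<lambda>i. m i + n i) \<Longrightarrow>
    (\<exists>!p. fst p \<in> P \<and> snd p \<in> P \<and> deg L (fst p) = m \<and> deg L (snd p) = n
          \<and> src L (fst p) = rng L (snd p) \<and> cmp L (fst p) (snd p) = l)"
  using kgraph unfolding is_kgraph_def by blast

lemma deg_rng: assumes "l \<in> P" shows "deg L (rng L l) = (\<lambda>_. 0)"
proof -
  have "deg L l = (\<lambda>i. deg L (rng L l) i + deg L l i)"
    using deg_cmp[of "rng L l" l] rng_src_in[OF assms] rng_src_idem[OF assms] cmp_units[OF assms] assms
    by simp
  hence "deg L l i = deg L (rng L l) i + deg L l i" for i by (rule fun_cong)
  thus ?thesis by auto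
qed

lemma deg_src: assumes "l \<in> P" shows "deg L (src L l) = (\<lambda>_. 0)"
proof -
  have "deg L l = (\<lambda>i. deg L l i + deg L (src L l) i)"
    using deg_cmp[of l "src L l"] rng_src_in[OF assms] rng_src_idem[OF assms] cmp_units[OF assms] assms
    by simp
  hence "deg L l i = deg L l i + deg L (src L l) i" for i by (rule fun_cong)
  thus ?thesis by auto
qed

lemma rng_in_V: "l \<in> P \<Longrightarrow> rng L l \<in> V"
  using rng_src_in deg_rng unfolding vertices_def by auto

lemma src_in_V: "l \<in> P \<Longrightarrow> src L l \<in> V"
  using rng_src_in deg_src unfolding vertices_def by auto

lemma vertexI: "l \<in> P \<Longrightarrow> deg L l = (\<lambda>_. 0) \<Longrightarrow> l \<in> V"
  unfolding vertices_def by auto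

text \<open>A path of degree 0 factors both as rng l * l and as l * src l; unique factorisation
  identifies the two factorisations.\<close>

lemma vertexD:
  assumes "v \<in> V"
  shows "v \<in> P" "rng L v = v" "src L v = v" "deg L v = (\<lambda>_. 0)"
proof -
  show vP: "v \<in> P" and d: "deg L v = (\<lambda>_. 0)" using assms unfolding vertices_def by auto
  define Q where "Q p \<longleftrightarrow> fst p \<in> P \<and> snd p \<in> P \<and> deg L (fst p) = (\<lambda>_. 0)
     \<and> deg L (snd p) = (\<lambda>_. 0) \<and> src L (fst p) = rng L (snd p) \<and> cmp L (fst p) (snd p) = v" for p
  have "\<exists>!p. Q p" unfolding Q_def by (rule unique_factorisation[OF vP]) (simp add: d)
  moreover have "Q (rng L v, v)" "Q (v, src L v)" unfolding Q_def
    using vP rng_src_in[OF vP] deg_rng[OF vP] deg_src[OF vP] d rng_src_idem[OF vP] cmp_units[OF vP]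
    by auto
  ultimately have "(rng L v, v) = (v, src L v)" by blast
  thus "rng L v = v" "src L v = v" by auto
qed

lemma finite_V: "finite V"
  using finite unfolding finite_kgraph_def vertices_def by simp

lemma path_between_in_V: "path_between L u w \<Longrightarrow> u \<in> V \<and> w \<in> V"
  unfolding path_between_def using rng_in_V src_in_V by auto

lemma path_between_refl: "v \<in> V \<Longrightarrow> path_between L v v"
  unfolding path_between_def using vertexD[of v] by auto

lemma path_between_trans:
  assumes "path_between L u m" "path_between L m w"
  shows "path_between L u w"
proof -
  obtain l1 where l1: "l1 \<in> P" "rng L l1 = u" "src L l1 = m"
    using assms(1) unfolding path_between_def by auto
  obtain l2 where l2: "l2 \<in> P" "rng L l2 = m" "src L l2 = w"
    using assms(2) unfolding path_between_def by auto
  show ?thesis unfolding path_between_def using cmp_in[OF l1(1) l2(1)] l1 l2 by auto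
qed

lemma deg_cmp_nonzero:
  assumes "l1 \<in> P" "l2 \<in> P" "src L l1 = rng L l2" "deg L l1 \<noteq> (\<lambda>_. 0) \<or> deg L l2 \<noteq> (\<lambda>_. 0)"
  shows "deg L (cmp L l1 l2) \<noteq> (\<lambda>_. 0)"
proof
  assume "deg L (cmp L l1 l2) = (\<lambda>_. 0)"
  hence "(\<lambda>i. deg L l1 i + deg L l2 i) = (\<lambda>_. 0)" using deg_cmp[OF assms(1-3)] by simp
  hence "deg L l1 i + deg L l2 i = 0" for i by (rule fun_cong)
  hence "deg L l1 i = 0 \<and> deg L l2 i = 0" for i by simp
  thus False using assms(4) by auto
qed

lemma proper_path_if_neq:
  assumes "path_between L u w" "u \<noteq> w"
  shows "proper_path L u w"
proof -
  obtain l where l: "l \<in> P" "rng L l = u" "src L l = w"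
    using assms(1) unfolding path_between_def by auto
  have "deg L l \<noteq> (\<lambda>_. 0)" using vertexI[OF l(1)] vertexD[of l] l assms(2) by auto
  thus ?thesis unfolding proper_path_def using l by blast
qed

lemma proper_path_trans_left:
  assumes "proper_path L u m" "path_between L m w"
  shows "proper_path L u w"
proof -
  obtain l1 where l1: "l1 \<in> P" "rng L l1 = u" "src L l1 = m" "deg L l1 \<noteq> (\<lambda>_. 0)"
    using assms(1) unfolding proper_path_def by auto
  obtain l2 where l2: "l2 \<in> P" "rng L l2 = m" "src L l2 = w"
    using assms(2) unfolding path_between_def by auto
  show ?thesis
    unfolding proper_path_def using cmp_in[OF l1(1) l2(1)] deg_cmp_nonzero[OF l1(1) l2(1)] l1 l2 by auto
qed

lemma proper_path_trans_right:
  assumes "path_between L u m" "proper_path L m w"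
  shows "proper_path L u w"
proof -
  obtain l1 where l1: "l1 \<in> P" "rng L l1 = u" "src L l1 = m"
    using assms(1) unfolding path_between_def by auto
  obtain l2 where l2: "l2 \<in> P" "rng L l2 = m" "src L l2 = w" "deg L l2 \<noteq> (\<lambda>_. 0)"
    using assms(2) unfolding proper_path_def by auto
  show ?thesis
    unfolding proper_path_def using cmp_in[OF l1(1) l2(1)] deg_cmp_nonzero[OF l1(1) l2(1)] l1 l2 by auto
qed

lemma component_subset: "is_component L C \<Longrightarrow> C \<subseteq> V"
  unfolding is_component_def by blast

lemma component_nonempty: "is_component L C \<Longrightarrow> C \<noteq> {}"
  unfolding is_component_def vequiv_def using path_between_refl by blast

lemma component_of_vertex: "v \<in> V \<Longrightarrow> is_component L {w\<in>V. vequiv L v w}"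
  unfolding is_component_def by blast

lemma component_path:
  assumes "is_component L C" "u \<in> C" "w \<in> C"
  shows "path_between L u w"
  using assms path_between_trans unfolding is_component_def vequiv_def by blast

lemma component_convex:
  assumes "is_component L C" "u \<in> C" "w \<in> C" "path_between L u m" "path_between L m w"
  shows "m \<in> C"
proof -
  obtain v where v: "v \<in> V" "C = {w\<in>V. vequiv L v w}" using assms(1) unfolding is_component_def by blast
  hence "path_between L v m" "path_between L m v"
    using assms path_between_trans unfolding vequiv_def by blast+
  thus ?thesis using v path_between_in_V assms(4) unfolding vequiv_def by blast
qed

lemma closure_above_iff: "w \<in> closure_above L C \<longleftrightarrow> w \<in> V \<and> (\<exists>c\<in>C. path_between L w c)"
  unfolding closure_above_def paths_between_def path_between_def by auto

lemma proper_path_in_nontrivial: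
  assumes C: "is_component L C" and nt: "\<not> trivial_comp L C" and u: "u \<in> C" and w: "w \<in> C"
  shows "proper_path L u w"
proof -
  have uC: "u \<in> paths_between L C C"
    using vertexD[of u] u component_subset[OF C] unfolding paths_between_def by auto
  then obtain l where l: "l \<in> paths_between L C C" "l \<noteq> u"
    using nt unfolding trivial_comp_def by blast
  hence lP: "l \<in> P" "rng L l \<in> C" "src L l \<in> C" unfolding paths_between_def by auto
  obtain a b where ab: "a \<in> C" "b \<in> C" "proper_path L a b"
  proof (cases "deg L l = (\<lambda>_. 0)")
    case True
    hence "l \<in> C" using vertexI[OF lP(1)] vertexD[of l] lP by auto
    moreover have "proper_path L u l" using proper_path_if_neq[OF component_path[OF C u]] l(2) calculation
      by blast
    ultimately show ?thesis using that u by blast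
  next
    case False
    thus ?thesis using that lP unfolding proper_path_def by blast
  qed
  show ?thesis
    using proper_path_trans_left[OF proper_path_trans_right[OF component_path[OF C u ab(1)] ab(3)]
          component_path[OF C ab(2) w]] .
qed

lemma no_proper_path_in_trivial:
  assumes C: "is_component L C" and t: "trivial_comp L C" and u: "u \<in> C" and w: "w \<in> C"
  shows "\<not> proper_path L u w"
proof
  assume "proper_path L u w"
  then obtain l where l: "l \<in> P" "deg L l \<noteq> (\<lambda>_. 0)" "rng L l = u" "src L l = w"
    unfolding proper_path_def by blast
  have "u \<in> paths_between L C C" "l \<in> paths_between L C C"
    using vertexD[of u] u w l component_subset[OF C] unfolding paths_between_def by auto
  hence "l = u" using t unfolding trivial_comp_def by auto
  thus False using l(2) vertexD[of u] u component_subset[OF C] by auto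
qed


lemma nonneg_vmat: "nonneg_mat (A i)"
  unfolding nonneg_mat_def vmat_def by simp

lemma vmat_edge: "A i u w \<noteq> 0 \<Longrightarrow> \<exists>l\<in>P. deg L l = unitvec i \<and> rng L l = u \<and> src L l = w"
  unfolding vmat_def by (metis (mono_tags, lifting) card.empty empty_Collect_eq of_nat_0)

lemma finite_paths_deg: "finite {l \<in> P. deg L l = a \<and> rng L l = u \<and> src L l = w}"
proof -
  have "finite {l \<in> P. deg L l = a}" using finite unfolding finite_kgraph_def by blast
  thus ?thesis by (rule finite_subset[rotated]) auto
qed

lemma vmat_pos:
  assumes "l \<in> P" "deg L l = unitvec i"
  shows "0 < A i (rng L l) (src L l)"
proof -
  have "l \<in> {l' \<in> P. deg L l' = unitvec i \<and> rng L l' = rng L l \<and> src L l' = src L l}"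
    using assms by auto
  hence "card {l' \<in> P. deg L l' = unitvec i \<and> rng L l' = rng L l \<and> src L l' = src L l} > 0"
    using finite_paths_deg card_gt_0_iff by blast
  thus ?thesis unfolding vmat_def by simp
qed

lemma unitvec_nonzero: "unitvec i \<noteq> (\<lambda>_. 0)"
  unfolding unitvec_def by (metis zero_neq_one)

lemma path_supported_vmat: "path_supported L (A i)"
  unfolding path_supported_def path_between_def using vmat_edge by blast

lemma path_supported_mident: "path_supported L mident"
  unfolding path_supported_def mident_def using path_between_refl by auto

lemma path_supported_mmult:
  assumes "path_supported L B1" "path_supported L B2"
  shows "path_supported L (mmult V B1 B2)"
  unfolding path_supported_def
proof (intro ballI impI)
  fix u w assume uw: "u \<in> V" "w \<in> V" and "mmult V B1 B2 u w \<noteq> 0"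
  then obtain m where "m \<in> V" "B1 u m * B2 m w \<noteq> 0"
    unfolding mmult_def by (meson sum.not_neutral_contains_not_neutral)
  hence "path_between L u m" "path_between L m w" using assms uw unfolding path_supported_def by auto
  thus "path_between L u w" by (rule path_between_trans)
qed

lemma path_supported_mpow: "path_supported L B \<Longrightarrow> path_supported L (mpow V B n)"
  by (induction n) (auto simp: path_supported_mident path_supported_mmult)

lemma path_supported_sum:
  assumes "\<forall>j\<in>J. path_supported L (C j)"
  shows "path_supported L (\<lambda>u w. \<Sum>j\<in>J. C j u w)"
  unfolding path_supported_def
proof (intro ballI impI)
  fix u w assume "u \<in> V" "w \<in> V" "(\<Sum>j\<in>J. C j u w) \<noteq> 0"
  moreover obtain j where "j \<in> J" "C j u w \<noteq> 0"
    using calculation(3) by (meson sum.not_neutral_contains_not_neutral)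
  ultimately show "path_between L u w" using assms unfolding path_supported_def by blast
qed

abbreviation vmat_fold :: "nat list \<Rightarrow> (nat \<Rightarrow> nat) \<Rightarrow> 'a \<Rightarrow> 'a \<Rightarrow> real" where
  "vmat_fold xs a \<equiv> foldr (\<lambda>i M. mmult V (mpow V (A i) (a i)) M) xs mident"

lemma path_supported_vmat_fold: "path_supported L (vmat_fold xs a)"
  by (induction xs) (auto simp: path_supported_mident path_supported_mmult path_supported_mpow path_supported_vmat)

lemma path_supported_vmat_F: "path_supported L (vmat_F k L F)"
  unfolding vmat_F_def vmat_pow_def by (rule path_supported_sum) (simp add: path_supported_vmat_fold)

lemma nonneg_vmat_pow: "nonneg_mat (vmat_pow k L a)"
proof -
  have "nonneg_mat (vmat_fold xs a)" for xs
    by (induction xs) (auto simp: nonneg_mat_mident nonneg_mat_mmult nonneg_mat_mpow nonneg_vmat)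
  thus ?thesis unfolding vmat_pow_def .
qed

lemma nonneg_vmat_F: "nonneg_mat (vmat_F k L F)"
  using nonneg_vmat_pow unfolding vmat_F_def nonneg_mat_def by (auto intro!: sum_nonneg)

definition path_convex :: "'a set \<Rightarrow> bool" where
  "path_convex D \<longleftrightarrow> D \<subseteq> V \<and> (\<forall>u\<in>D. \<forall>w\<in>D. \<forall>m. path_between L u m \<longrightarrow> path_between L m w \<longrightarrow> m \<in> D)"

lemma path_convex_component: "is_component L C \<Longrightarrow> path_convex C"
  unfolding path_convex_def using component_subset component_convex by blast

lemma finite_path_convex: "path_convex D \<Longrightarrow> finite D"
  unfolding path_convex_def using finite_V finite_subset by blast

lemma mvmult_mmult_restrict:
  assumes D: "path_convex D" and B1: "path_supported L B1" and B2: "path_supported L B2" and u: "u \<in> D"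
  shows "mvmult D (mmult V B1 B2) x u = mvmult D B1 (mvmult D B2 x) u"
proof -
  have DV: "D \<subseteq> V" using D unfolding path_convex_def by blast
  have "mvmult D (mmult V B1 B2) x u = (\<Sum>m\<in>V. B1 u m * mvmult D B2 x m)"
    unfolding mvmult_def mmult_def by (simp add: sum_distrib_left sum_distrib_right mult.assoc) (rule sum.swap)
  also have "\<dots> = (\<Sum>m\<in>D. B1 u m * mvmult D B2 x m)"
  proof (rule sum.mono_neutral_right[OF finite_V DV], intro ballI)
    fix m assume m: "m \<in> V - D"
    show "B1 u m * mvmult D B2 x m = 0"
    proof (cases "B1 u m = 0")
      case False
      hence um: "path_between L u m" using B1 u m DV unfolding path_supported_def by blast
      have "B2 m w = 0" if w: "w \<in> D" for w
      proof (rule ccontr)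
        assume "B2 m w \<noteq> 0"
        hence "path_between L m w" using B2 m w DV unfolding path_supported_def by blast
        hence "m \<in> D" using D um u w unfolding path_convex_def by blast
        thus False using m by blast
      qed
      thus ?thesis unfolding mvmult_def by simp
    qed simp
  qed
  also have "\<dots> = mvmult D B1 (mvmult D B2 x) u" unfolding mvmult_def ..
  finally show ?thesis .
qed

definition paths_deg :: "(nat \<Rightarrow> nat) \<Rightarrow> 'a \<Rightarrow> 'a \<Rightarrow> 'a set" where
  "paths_deg a u w = {l \<in> P. deg L l = a \<and> rng L l = u \<and> src L l = w}"

lemma bij_betw_cmp_paths_deg:
  "bij_betw (\<lambda>(\<mu>,\<nu>). cmp L \<mu> \<nu>) (\<Union>m\<in>V. paths_deg a u m \<times> paths_deg b m w)
     (paths_deg (\<lambda>x. a x + b x) u w)"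
  (is "bij_betw _ ?Pr _")
proof (rule bij_betwI')
    fix p q assume "p \<in> ?Pr" "q \<in> ?Pr"
    then obtain \<mu> \<nu> \<mu>' \<nu>' where pq: "p = (\<mu>,\<nu>)" "q = (\<mu>',\<nu>')"
      "\<mu> \<in> P" "\<nu> \<in> P" "deg L \<mu> = a" "deg L \<nu> = b" "src L \<mu> = rng L \<nu>"
      "\<mu>' \<in> P" "\<nu>' \<in> P" "deg L \<mu>' = a" "deg L \<nu>' = b" "src L \<mu>' = rng L \<nu>'"
      unfolding paths_deg_def by auto
    show "((\<lambda>(\<mu>,\<nu>). cmp L \<mu> \<nu>) p = (\<lambda>(\<mu>,\<nu>). cmp L \<mu> \<nu>) q) = (p = q)"
    proof
      assume eq: "(\<lambda>(\<mu>,\<nu>). cmp L \<mu> \<nu>) p = (\<lambda>(\<mu>,\<nu>). cmp L \<mu> \<nu>) q"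
      have "\<exists>!p. fst p \<in> P \<and> snd p \<in> P \<and> deg L (fst p) = a \<and> deg L (snd p) = b
              \<and> src L (fst p) = rng L (snd p) \<and> cmp L (fst p) (snd p) = cmp L \<mu> \<nu>"
        using cmp_in[OF pq(3,4,7)] deg_cmp[OF pq(3,4,7)] pq by (intro unique_factorisation) auto
      moreover have "cmp L \<mu>' \<nu>' = cmp L \<mu> \<nu>" using eq pq by simp
      ultimately show "p = q" using pq by (metis fst_conv snd_conv)
    qed simp
  next
    fix p assume "p \<in> ?Pr"
    thus "(\<lambda>(\<mu>,\<nu>). cmp L \<mu> \<nu>) p \<in> paths_deg (\<lambda>x. a x + b x) u w"
      using cmp_in deg_cmp unfolding paths_deg_def by auto
  next
    fix l assume "l \<in> paths_deg (\<lambda>x. a x + b x) u w"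
    hence l: "l \<in> P" "deg L l = (\<lambda>x. a x + b x)" "rng L l = u" "src L l = w"
      unfolding paths_deg_def by auto
    obtain \<mu> \<nu> where p: "\<mu> \<in> P" "\<nu> \<in> P" "deg L \<mu> = a" "deg L \<nu> = b"
        "src L \<mu> = rng L \<nu>" "cmp L \<mu> \<nu> = l"
      using unique_factorisation[OF l(1,2)] by auto
    have "(\<mu>, \<nu>) \<in> ?Pr"
      using cmp_in[OF p(1,2,5)] p l rng_in_V[OF p(2)] unfolding paths_deg_def by auto
    thus "\<exists>p\<in>?Pr. l = (\<lambda>(\<mu>,\<nu>). cmp L \<mu> \<nu>) p" using p(6) by (intro bexI[of _ "(\<mu>, \<nu>)"]) auto
qed

lemma card_paths_deg_add:
  "(\<Sum>m\<in>V. card (paths_deg a u m) * card (paths_deg b m w)) = card (paths_deg (\<lambda>x. a x + b x) u w)"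
proof -
  have "(\<Sum>m\<in>V. card (paths_deg a u m) * card (paths_deg b m w))
      = card (\<Union>m\<in>V. paths_deg a u m \<times> paths_deg b m w)"
    by (subst card_UN_disjoint[OF finite_V])
      (auto simp: paths_deg_def finite_paths_deg card_cartesian_product)
  also have "\<dots> = card (paths_deg (\<lambda>x. a x + b x) u w)"
    by (rule bij_betw_same_card[OF bij_betw_cmp_paths_deg])
  finally show ?thesis .
qed

lemma vmat_commute: "commute_on V (A i) (A j)"
proof -
  have vmat_paths_deg: "A c = (\<lambda>u w. real (card (paths_deg (unitvec c) u w)))" for c
    unfolding vmat_def paths_deg_def by simp
  have "mmult V (A i) (A j) u w = mmult V (A j) (A i) u w" for u w
  proof -
    have "mmult V (A i) (A j) u w = real (card (paths_deg (\<lambda>x. unitvec i x + unitvec j x) u w))"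
      unfolding mmult_def vmat_paths_deg card_paths_deg_add[symmetric] by simp
    also have "(\<lambda>x. unitvec i x + unitvec j x) = (\<lambda>x. unitvec j x + unitvec i x)" by (simp add: add.commute)
    also have "real (card (paths_deg \<dots> u w)) = mmult V (A j) (A i) u w"
      unfolding mmult_def vmat_paths_deg card_paths_deg_add[symmetric] by simp
    finally show ?thesis .
  qed
  thus ?thesis unfolding commute_on_def by blast
qed

lemma vmat_fold_cong: "\<forall>i\<in>set xs. a i = b i \<Longrightarrow> vmat_fold xs a = vmat_fold xs b"
  by (induction xs) auto

lemma vmat_fold_Suc:
  assumes "c \<in> set xs" "distinct xs" "u \<in> V" "w \<in> V"
  shows "vmat_fold xs (a(c := Suc (a c))) u w = mmult V (A c) (vmat_fold xs a) u w"
  using assms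
proof (induction xs arbitrary: u w)
  case Nil thus ?case by simp
next
  case (Cons i xs)
  show ?case
  proof (cases "i = c")
    case True
    hence "vmat_fold xs (a(c := Suc (a c))) = vmat_fold xs a" using Cons by (intro vmat_fold_cong) auto
    thus ?thesis using True by (simp add: mmult_assoc)
  next
    case False
    have "vmat_fold (i # xs) (a(c := Suc (a c))) u w
        = mmult V (mpow V (A i) (a i)) (mmult V (A c) (vmat_fold xs a)) u w"
      using False Cons by (simp add: mmult_cong)
    also have "\<dots> = mmult V (mmult V (A c) (mpow V (A i) (a i))) (vmat_fold xs a) u w"
      using commute_on_mpow[OF finite_V vmat_commute[of c i], of "a i"] Cons(4)
      unfolding commute_on_def mmult_assoc[symmetric] by (intro mmult_cong) auto
    also have "\<dots> = mmult V (A c) (vmat_fold (i # xs) a) u w" by (simp add: mmult_assoc)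
    finally show ?thesis .
  qed
qed

lemma vmat_pow_zero: "u \<in> V \<Longrightarrow> w \<in> V \<Longrightarrow> vmat_pow k L (\<lambda>_. 0) u w = mident u w"
proof -
  have "\<forall>u\<in>V. \<forall>w\<in>V. vmat_fold xs (\<lambda>_. 0) u w = mident u w" for xs
    by (induction xs) (auto simp: mmult_mident_left finite_V)
  thus "u \<in> V \<Longrightarrow> w \<in> V \<Longrightarrow> ?thesis" unfolding vmat_pow_def by blast
qed

lemma vmat_pow_Suc:
  "c < k \<Longrightarrow> u \<in> V \<Longrightarrow> w \<in> V \<Longrightarrow>
    vmat_pow k L (a(c := Suc (a c))) u w = mmult V (A c) (vmat_pow k L a) u w"
  unfolding vmat_pow_def by (rule vmat_fold_Suc) auto

lemma zero_if_sum_zero: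
  fixes a :: "nat \<Rightarrow> nat"
  assumes "in_Nk k a" "sum a {..<k} = 0"
  shows "a = (\<lambda>_. 0)"
proof
  fix i show "a i = 0" using assms unfolding in_Nk_def by (cases "i < k") auto
qed

lemma pos_coord_if_sum_pos:
  fixes a :: "nat \<Rightarrow> nat"
  shows "0 < sum a {..<k} \<Longrightarrow> \<exists>c<k. 0 < a c"
  by (metis lessThan_iff gr0I sum.neutral less_irrefl)

lemma path_if_vmat_pow_pos:
  "in_Nk k a \<Longrightarrow> u \<in> V \<Longrightarrow> w \<in> V \<Longrightarrow> 0 < vmat_pow k L a u w \<Longrightarrow>
    \<exists>l\<in>P. deg L l = a \<and> rng L l = u \<and> src L l = w"
proof (induction "sum a {..<k}" arbitrary: a u)
  case 0
  have a: "a = (\<lambda>_. 0)" by (rule zero_if_sum_zero[OF 0(2) 0(1)[symmetric]])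
  hence "u = w" using vmat_pow_zero[OF 0(3,4)] 0(5) by (auto simp: mident_def split: if_splits)
  thus ?case using vertexD[OF 0(3)] a by auto
next
  case (Suc d)
  obtain c where c: "c < k" "0 < a c" using pos_coord_if_sum_pos[of a] Suc(2) by auto
  define a' where "a' = a(c := a c - 1)"
  have aa: "a = a'(c := Suc (a' c))" using c unfolding a'_def by auto
  have a'N: "in_Nk k a'" using Suc(3) c unfolding a'_def in_Nk_def by auto
  have sa: "d = sum a' {..<k}"
    using Suc(2) c unfolding a'_def by (simp add: sum.remove[of "{..<k}" c])
  have "0 < mmult V (A c) (vmat_pow k L a') u w" using vmat_pow_Suc[OF c(1) Suc(4,5), of a'] aa Suc(6) by simp
  then obtain m where m: "m \<in> V" "0 < A c u m * vmat_pow k L a' m w"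
    unfolding mmult_def by (meson not_le sum_nonpos)
  have "0 \<le> A c u m" using nonneg_vmat[of c] unfolding nonneg_mat_def by blast
  hence am: "A c u m \<noteq> 0" "0 < vmat_pow k L a' m w"
    using m(2) by (auto simp: zero_less_mult_iff)
  obtain \<mu> where mu: "\<mu> \<in> P" "deg L \<mu> = unitvec c" "rng L \<mu> = u" "src L \<mu> = m"
    using vmat_edge[OF am(1)] by blast
  obtain \<nu> where nu: "\<nu> \<in> P" "deg L \<nu> = a'" "rng L \<nu> = m" "src L \<nu> = w"
    using Suc(1)[OF sa a'N m(1) Suc(5) am(2)] by blast
  have "deg L (cmp L \<mu> \<nu>) = a" using deg_cmp[of \<mu> \<nu>] mu nu aa unfolding unitvec_def by auto
  thus ?case using cmp_in[of \<mu> \<nu>] mu nu by auto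
qed

end

section \<open>Common eigenvectors on components\<close>

definition mono_val :: "nat \<Rightarrow> (nat \<Rightarrow> real) \<Rightarrow> (nat \<Rightarrow> nat) \<Rightarrow> real" where
  "mono_val k r a = (\<Prod>i<k. r i ^ a i)"

definition F_poly :: "nat \<Rightarrow> (nat \<Rightarrow> nat) list \<Rightarrow> (nat \<Rightarrow> real) \<Rightarrow> real" where
  "F_poly k F r = (\<Sum>j<length F. mono_val k r (F ! j))"

lemma mono_val_mono: "\<forall>i<k. 0 \<le> r i \<and> r i \<le> s i \<Longrightarrow> mono_val k r a \<le> mono_val k s a"
  unfolding mono_val_def by (intro prod_mono) (auto intro: power_mono)

lemma mono_val_nonneg: "\<forall>i<k. 0 \<le> r i \<Longrightarrow> 0 \<le> mono_val k r a"
  unfolding mono_val_def by (intro prod_nonneg) auto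

lemma mono_val_unitvec:
  assumes "i < k"
  shows "mono_val k r (unitvec i) = r i"
proof -
  have "mono_val k r (unitvec i) = (\<Prod>l<k. if l = i then r l else 1)"
    unfolding mono_val_def unitvec_def by (intro prod.cong) auto
  also have "\<dots> = r i" using assms by (simp add: prod.delta)
  finally show ?thesis .
qed

lemma F_poly_cong: "\<forall>i<k. r i = s i \<Longrightarrow> F_poly k F r = F_poly k F s"
  unfolding F_poly_def mono_val_def by (intro sum.cong prod.cong) auto

lemma F_poly_ge_coord:
  assumes "\<forall>i<k. 0 \<le> r i" "i < k" "unitvec i \<in> set F"
  shows "r i \<le> F_poly k F r"
proof -
  obtain j0 where j0: "j0 < length F" "F ! j0 = unitvec i" using assms(3) unfolding in_set_conv_nth by blast
  have "mono_val k r (F ! j0) \<le> (\<Sum>j<length F. mono_val k r (F ! j))"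
    using j0 mono_val_nonneg[OF assms(1)] by (intro member_le_sum) auto
  thus ?thesis using j0 mono_val_unitvec[OF assms(2)] unfolding F_poly_def by simp
qed

lemma F_poly_strict_mono:
  assumes rs: "\<forall>i<k. 0 \<le> r i \<and> r i \<le> s i" and i: "i < k" "r i < s i" and u: "unitvec i \<in> set F"
  shows "F_poly k F r < F_poly k F s"
proof -
  obtain j0 where j0: "j0 < length F" "F ! j0 = unitvec i" using u unfolding in_set_conv_nth by blast
  show ?thesis unfolding F_poly_def
  proof (rule sum_strict_mono_ex1)
    show "\<forall>j\<in>{..<length F}. mono_val k r (F ! j) \<le> mono_val k s (F ! j)" using mono_val_mono[OF rs] by auto
    show "\<exists>j\<in>{..<length F}. mono_val k r (F ! j) < mono_val k s (F ! j)"
      using j0 i mono_val_unitvec[OF i(1)] by (intro bexI[of _ j0]) auto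
  qed simp
qed

context fin_kgraph
begin

lemma mvmult_mpow_eigvec:
  assumes D: "path_convex D" and B: "path_supported L B" and ev: "\<forall>u\<in>D. mvmult D B y u = c * y u"
  shows "\<forall>u\<in>D. mvmult D (mpow V B n) y u = c ^ n * y u"
proof (induction n)
  case 0 show ?case using finite_path_convex[OF D] by (simp add: mvmult_mident)
next
  case (Suc n)
  show ?case
  proof
    fix u assume u: "u \<in> D"
    have "mvmult D (mpow V B (Suc n)) y u = mvmult D B (mvmult D (mpow V B n) y) u"
      using mvmult_mmult_restrict[OF D B path_supported_mpow[OF B] u] by simp
    also have "\<dots> = mvmult D B (\<lambda>w. c ^ n * y w) u" using Suc by (intro mvmult_cong) auto
    also have "\<dots> = c ^ Suc n * y u" using ev u by (simp add: mvmult_cmult)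
    finally show "mvmult D (mpow V B (Suc n)) y u = c ^ Suc n * y u" .
  qed
qed

lemma mvmult_vmat_fold_eigvec:
  assumes D: "path_convex D" and ev: "\<forall>i\<in>set xs. \<forall>u\<in>D. mvmult D (A i) x u = r i * x u"
  shows "\<forall>u\<in>D. mvmult D (vmat_fold xs a) x u = (\<Prod>i\<leftarrow>xs. r i ^ a i) * x u"
  using ev
proof (induction xs)
  case Nil show ?case using finite_path_convex[OF D] by (simp add: mvmult_mident)
next
  case (Cons i xs)
  show ?case
  proof
    fix u assume u: "u \<in> D"
    let ?p = "(\<Prod>i\<leftarrow>xs. r i ^ a i)"
    have "mvmult D (vmat_fold (i # xs) a) x u = mvmult D (mpow V (A i) (a i)) (mvmult D (vmat_fold xs a) x) u"
      using mvmult_mmult_restrict[OF D path_supported_mpow[OF path_supported_vmat] path_supported_vmat_fold u]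
      by simp
    also have "\<dots> = ?p * mvmult D (mpow V (A i) (a i)) x u"
      using Cons by (simp add: mvmult_cong[of D _ "\<lambda>w. ?p * x w"] mvmult_cmult)
    also have "\<dots> = ?p * (r i ^ a i * x u)"
      using mvmult_mpow_eigvec[OF D path_supported_vmat, of i x "r i" "a i"] Cons u by simp
    finally show "mvmult D (vmat_fold (i # xs) a) x u = (\<Prod>i\<leftarrow>i # xs. r i ^ a i) * x u" by simp
  qed
qed

lemma mvmult_vmat_F_eigvec:
  assumes D: "path_convex D" and ev: "\<forall>i<k. \<forall>u\<in>D. mvmult D (A i) x u = r i * x u" and u: "u \<in> D"
  shows "mvmult D (vmat_F k L F) x u = F_poly k F r * x u"
proof -
  have pow: "mvmult D (vmat_pow k L a) x u = mono_val k r a * x u" for a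
  proof -
    have "(\<Prod>i\<leftarrow>[0..<k]. r i ^ a i) = mono_val k r a"
      unfolding mono_val_def by (simp add: prod.distinct_set_conv_list[symmetric] atLeast0LessThan)
    thus ?thesis unfolding vmat_pow_def using mvmult_vmat_fold_eigvec[OF D, of "[0..<k]" x r a] ev u by auto
  qed
  show ?thesis
    unfolding vmat_F_def mvmult_sum_mat pow F_poly_def by (simp add: sum_distrib_right)
qed

lemma commute_on_vmat_F: "commute_on V (A i) (vmat_F k L F)"
proof -
  have "commute_on V (A i) (vmat_fold xs a)" for xs a
  proof (induction xs)
    case Nil show ?case by (simp add: commute_on_mident finite_V)
  next
    case (Cons j xs)
    thus ?case by (simp add: commute_on_mmult commute_on_mpow finite_V vmat_commute)
  qed
  thus ?thesis unfolding vmat_F_def vmat_pow_def by (intro commute_on_sum) blast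
qed

lemma mvmult_vmat_F_commute:
  assumes D: "path_convex D" and u: "u \<in> D"
  shows "mvmult D (vmat_F k L F) (mvmult D (A i) y) u = mvmult D (A i) (mvmult D (vmat_F k L F) y) u"
proof -
  have "mvmult D (vmat_F k L F) (mvmult D (A i) y) u = mvmult D (mmult V (vmat_F k L F) (A i)) y u"
    using mvmult_mmult_restrict[OF D path_supported_vmat_F path_supported_vmat u] by simp
  also have "\<dots> = mvmult D (mmult V (A i) (vmat_F k L F)) y u"
  proof (rule mvmult_mat_cong, rule ballI)
    fix w assume "w \<in> D"
    hence "u \<in> V" "w \<in> V" using D u unfolding path_convex_def by (meson subsetD)+
    thus "mmult V (vmat_F k L F) (A i) u w = mmult V (A i) (vmat_F k L F) u w"
      using commute_on_vmat_F[of i F] unfolding commute_on_def by simp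
  qed
  also have "\<dots> = mvmult D (A i) (mvmult D (vmat_F k L F) y) u"
    using mvmult_mmult_restrict[OF D path_supported_vmat path_supported_vmat_F u] by simp
  finally show ?thesis .
qed

lemma well_chosen_pos_iff:
  "well_chosen k L F \<Longrightarrow> u \<in> V \<Longrightarrow> w \<in> V \<Longrightarrow> 0 < vmat_F k L F u w \<longleftrightarrow> proper_path L u w"
  unfolding well_chosen_def proper_path_def by blast

lemma vmat_F_pos_in_component:
  assumes wc: "well_chosen k L F" and D: "is_component L D" "\<not> trivial_comp L D" and uw: "u \<in> D" "w \<in> D"
  shows "0 < vmat_F k L F u w"
  using well_chosen_pos_iff[OF wc] proper_path_in_nontrivial[OF D uw] component_subset[OF D(1)] uw
  by blast

lemma component_common_eigvec:
  assumes wc: "well_chosen k L F" and D: "is_component L D" "\<not> trivial_comp L D"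
  shows "\<exists>x. (\<forall>u\<in>D. 0 < x u) \<and> (\<forall>u\<in>D. mvmult D (vmat_F k L F) x u = spec_rad D (vmat_F k L F) * x u)
           \<and> (\<forall>i<k. \<forall>u\<in>D. mvmult D (A i) x u = spec_rad D (A i) * x u)"
proof -
  have cD: "path_convex D" by (rule path_convex_component[OF D(1)])
  have P: "\<forall>u\<in>D. \<forall>w\<in>D. 0 < vmat_F k L F u w" using vmat_F_pos_in_component[OF wc D] by blast
  have M: "\<forall>i\<in>{..<k}. \<forall>u\<in>D. \<forall>w\<in>D. 0 \<le> A i u w" using nonneg_vmat unfolding nonneg_mat_def by blast
  have "\<forall>i\<in>{..<k}. \<forall>y. \<forall>u\<in>D. mvmult D (vmat_F k L F) (mvmult D (A i) y) u
                                  = mvmult D (A i) (mvmult D (vmat_F k L F) y) u"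
    using mvmult_vmat_F_commute[OF cD] by blast
  from common_perron_eigvec[OF finite_path_convex[OF cD] component_nonempty[OF D(1)] P M this]
  show ?thesis by auto
qed

lemma spec_rad_vmat_F:
  assumes wc: "well_chosen k L F" and D: "is_component L D" "\<not> trivial_comp L D"
  shows "spec_rad D (vmat_F k L F) = F_poly k F (\<lambda>i. spec_rad D (A i))"
proof -
  obtain x where x: "\<forall>u\<in>D. 0 < x u" "\<forall>u\<in>D. mvmult D (vmat_F k L F) x u = spec_rad D (vmat_F k L F) * x u"
      "\<forall>i<k. \<forall>u\<in>D. mvmult D (A i) x u = spec_rad D (A i) * x u"
    using component_common_eigvec[OF assms] by blast
  obtain u where u: "u \<in> D" using component_nonempty[OF D(1)] by blast
  have "spec_rad D (vmat_F k L F) * x u = mvmult D (vmat_F k L F) x u" using x(2) u by simp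
  also have "\<dots> = F_poly k F (\<lambda>i. spec_rad D (A i)) * x u"
    by (rule mvmult_vmat_F_eigvec[OF path_convex_component[OF D(1)] x(3) u])
  finally have "spec_rad D (vmat_F k L F) * x u = F_poly k F (\<lambda>i. spec_rad D (A i)) * x u" .
  moreover have "0 < x u" using x(1) u by blast
  ultimately show ?thesis by simp
qed

lemma spec_rad_vmat_trivial:
  assumes D: "is_component L D" "trivial_comp L D"
  shows "spec_rad D (A i) = 0"
proof (rule spec_rad_zero[OF finite_path_convex[OF path_convex_component[OF D(1)]]], intro ballI)
  fix u w assume uw: "u \<in> D" "w \<in> D"
  show "A i u w = 0"
  proof (rule ccontr)
    assume "A i u w \<noteq> 0"
    then obtain l where "l \<in> P" "deg L l = unitvec i" "rng L l = u" "src L l = w" using vmat_edge by blast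
    hence "proper_path L u w" using unitvec_nonzero[of i] unfolding proper_path_def
      by (intro bexI[of _ l]) auto
    thus False using no_proper_path_in_trivial[OF D uw] by blast
  qed
qed

lemma spec_rad_vmat_F_trivial:
  assumes wc: "well_chosen k L F" and D: "is_component L D" "trivial_comp L D"
  shows "spec_rad D (vmat_F k L F) = 0"
proof (rule spec_rad_zero[OF finite_path_convex[OF path_convex_component[OF D(1)]]], intro ballI)
  fix u w assume uw: "u \<in> D" "w \<in> D"
  hence "\<not> 0 < vmat_F k L F u w"
    using well_chosen_pos_iff[OF wc] no_proper_path_in_trivial[OF D uw] component_subset[OF D(1)] by blast
  moreover have "0 \<le> vmat_F k L F u w" using nonneg_vmat_F[of F] unfolding nonneg_mat_def by blast
  ultimately show "vmat_F k L F u w = 0" by simp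
qed

lemma positive_comp_nontrivial: "is_component L C \<Longrightarrow> positive_comp k L C \<Longrightarrow> \<not> trivial_comp L C"
  using spec_rad_vmat_trivial[of C 0] k_pos unfolding positive_comp_def by auto

end

section \<open>A well-chosen sequence containing the unit vectors\<close>

definition box_degrees :: "nat \<Rightarrow> nat \<Rightarrow> (nat \<Rightarrow> nat) list" where
  "box_degrees k N = map (\<lambda>xs i. if i < k then xs ! i else 0)
                       (filter (\<lambda>xs. xs \<noteq> replicate k 0) (List.n_lists k [0..<Suc N]))"

lemma set_box_degrees:
  "a \<in> set (box_degrees k N) \<longleftrightarrow> in_Nk k a \<and> a \<noteq> (\<lambda>_. 0) \<and> (\<forall>i<k. a i \<le> N)"
proof
  assume "a \<in> set (box_degrees k N)"
  then obtain xs where "xs \<in> set (List.n_lists k [0..<Suc N])" "xs \<noteq> replicate k 0"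
      "a = (\<lambda>i. if i < k then xs ! i else 0)"
    unfolding box_degrees_def set_map set_filter by blast
  hence xs: "length xs = k" "set xs \<subseteq> {0..<Suc N}" "xs \<noteq> replicate k 0"
      "a = (\<lambda>i. if i < k then xs ! i else 0)"
    unfolding set_n_lists by auto
  have "xs = replicate k 0" if "a = (\<lambda>_. 0)"
  proof (rule nth_equalityI)
    fix i assume "i < length xs"
    thus "xs ! i = replicate k 0 ! i" using that xs(1,4) by (metis nth_replicate)
  qed (use xs in simp)
  thus "in_Nk k a \<and> a \<noteq> (\<lambda>_. 0) \<and> (\<forall>i<k. a i \<le> N)"
    using xs nth_mem unfolding in_Nk_def by fastforce
next
  assume a: "in_Nk k a \<and> a \<noteq> (\<lambda>_. 0) \<and> (\<forall>i<k. a i \<le> N)"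
  hence "a = (\<lambda>i. if i < k then map a [0..<k] ! i else 0)" unfolding in_Nk_def by auto
  moreover have "map a [0..<k] \<noteq> replicate k 0"
  proof
    assume z: "map a [0..<k] = replicate k 0"
    have "a i = 0" for i
    proof (cases "i < k")
      case True thus ?thesis using arg_cong[OF z, of "\<lambda>xs. xs ! i"] by simp
    qed (use a in \<open>simp add: in_Nk_def\<close>)
    with a show False by blast
  qed
  moreover have "map a [0..<k] \<in> set (List.n_lists k [0..<Suc N])"
    unfolding set_n_lists using a by auto
  ultimately show "a \<in> set (box_degrees k N)" unfolding box_degrees_def by auto
qed

context fin_kgraph
begin

definition edge_rel :: "('a \<times> 'a) set" where
  "edge_rel = {(u,w). u \<in> V \<and> w \<in> V \<and> (\<exists>c<k. 0 < A c u w)}"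

lemma finite_edge_rel: "finite edge_rel"
  using finite_subset[of edge_rel "V \<times> V"] finite_V unfolding edge_rel_def by auto

lemma edge_trancl_if_proper_path:
  "l \<in> P \<Longrightarrow> deg L l \<noteq> (\<lambda>_. 0) \<Longrightarrow> (rng L l, src L l) \<in> edge_rel\<^sup>+"
proof (induction "sum (deg L l) {..<k}" arbitrary: l)
  case 0
  thus ?case using zero_if_sum_zero[OF deg_in_Nk[OF 0(2)]] by simp
next
  case (Suc d)
  obtain c where c: "c < k" "0 < deg L l c" using pos_coord_if_sum_pos[of "deg L l"] Suc(2) by auto
  define n where "n i = deg L l i - unitvec c i" for i
  have dl: "deg L l = (\<lambda>i. unitvec c i + n i)" using c unfolding n_def unitvec_def by auto
  obtain e l' where p: "e \<in> P" "l' \<in> P" "deg L e = unitvec c" "deg L l' = n"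
        "src L e = rng L l'" "cmp L e l' = l"
    using unique_factorisation[OF Suc(3) dl] by auto
  have "sum (deg L l) {..<k} = sum (unitvec c) {..<k} + sum n {..<k}" using dl by (simp add: sum.distrib)
  moreover have "sum (unitvec c) {..<k} = 1" using c unfolding unitvec_def by simp
  ultimately have sn: "d = sum n {..<k}" using Suc(2) by simp
  have lr: "rng L l = rng L e" "src L l = src L l'" using cmp_in[OF p(1,2,5)] p(6) by auto
  have edge: "(rng L e, rng L l') \<in> edge_rel"
    unfolding edge_rel_def using vmat_pos[OF p(1,3)] p(5) rng_in_V[OF p(1)] rng_in_V[OF p(2)] c(1) by auto
  show ?case
  proof (cases "n = (\<lambda>_. 0)")
    case True
    hence "src L l' = rng L l'" using vertexI[OF p(2)] vertexD[of l'] p(4) by simp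
    thus ?thesis using edge lr by auto
  next
    case False
    hence "(rng L l', src L l') \<in> edge_rel\<^sup>+" using Suc(1)[of l'] sn p(2,4) by simp
    thus ?thesis using edge lr by (auto intro: trancl_into_trancl2)
  qed
qed

lemma vmat_pow_pos_if_edge_relpow:
  "(u,w) \<in> edge_rel ^^ j \<Longrightarrow> u \<in> V \<Longrightarrow> w \<in> V \<Longrightarrow>
    \<exists>a. in_Nk k a \<and> sum a {..<k} = j \<and> 0 < vmat_pow k L a u w"
proof (induction j arbitrary: u)
  case 0
  thus ?case using vmat_pow_zero[OF 0(2,3)] by (intro exI[of _ "\<lambda>_. 0"]) (auto simp: in_Nk_def mident_def)
next
  case (Suc j)
  obtain m where m: "(u,m) \<in> edge_rel" "(m,w) \<in> edge_rel ^^ j" using relpow_Suc_D2[OF Suc(2)] by blast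
  obtain c where c: "c < k" "0 < A c u m" and mV: "m \<in> V" using m(1) unfolding edge_rel_def by auto
  obtain a' where a': "in_Nk k a'" "sum a' {..<k} = j" "0 < vmat_pow k L a' m w"
    using Suc(1)[OF m(2) mV Suc(4)] by blast
  define a where "a = a'(c := Suc (a' c))"
  have "in_Nk k a" using a' c unfolding a_def in_Nk_def by auto
  moreover have "sum a {..<k} = Suc j"
  proof -
    have "sum a ({..<k} - {c}) = sum a' ({..<k} - {c})" unfolding a_def by (intro sum.cong) auto
    thus ?thesis using a'(2) c unfolding a_def by (simp add: sum.remove[of "{..<k}" c])
  qed
  moreover have "0 < mmult V (A c) (vmat_pow k L a') u w"
    unfolding mmult_def using c a' mV finite_V nonneg_vmat nonneg_vmat_pow
    by (intro sum_pos2[of V m]) (auto simp: nonneg_mat_def)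
  hence "0 < vmat_pow k L a u w" unfolding a_def using vmat_pow_Suc[OF c(1) Suc(3,4)] by simp
  ultimately show ?case by blast
qed

text \<open>A proper path gives a walk in the finite edge relation, and a shortest such walk visits no
  edge twice; so degrees with entries at most the number of edges already see every proper path.
  The bound is taken one larger so that all unit vectors occur as well.\<close>

lemma well_chosen_box_degrees: "well_chosen k L (box_degrees k (Suc (card edge_rel)))"
  unfolding well_chosen_def
proof (rule conjI, use set_box_degrees in blast, intro ballI)
  let ?F = "box_degrees k (Suc (card edge_rel))"
  fix v w assume v: "v \<in> V" and w: "w \<in> V"
  show "0 < vmat_F k L ?F v w \<longleftrightarrow> (\<exists>l\<in>P. deg L l \<noteq> (\<lambda>_. 0) \<and> rng L l = v \<and> src L l = w)"
  proof
    assume "0 < vmat_F k L ?F v w"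
    then obtain j where j: "j < length ?F" "0 < vmat_pow k L (?F ! j) v w"
      unfolding vmat_F_def by (meson lessThan_iff not_le sum_nonpos)
    hence "in_Nk k (?F ! j)" "?F ! j \<noteq> (\<lambda>_. 0)" using set_box_degrees nth_mem by blast+
    thus "\<exists>l\<in>P. deg L l \<noteq> (\<lambda>_. 0) \<and> rng L l = v \<and> src L l = w"
      using path_if_vmat_pow_pos[OF _ v w j(2)] by metis
  next
    assume "\<exists>l\<in>P. deg L l \<noteq> (\<lambda>_. 0) \<and> rng L l = v \<and> src L l = w"
    hence "(v,w) \<in> edge_rel\<^sup>+" using edge_trancl_if_proper_path by blast
    then obtain j where j: "0 < j" "j \<le> card edge_rel" "(v,w) \<in> edge_rel ^^ j"
      using trancl_finite_eq_relpow[OF finite_edge_rel] by auto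
    obtain a where a: "in_Nk k a" "sum a {..<k} = j" "0 < vmat_pow k L a v w"
      using vmat_pow_pos_if_edge_relpow[OF j(3) v w] by blast
    have "a i \<le> Suc (card edge_rel)" if "i < k" for i
      using member_le_sum[of i "{..<k}" a] that a(2) j(2) by simp
    hence "a \<in> set ?F" using set_box_degrees a(1,2) j(1) by auto
    then obtain j0 where j0: "j0 < length ?F" "?F ! j0 = a" unfolding in_set_conv_nth by blast
    have "vmat_pow k L a v w \<le> (\<Sum>j<length ?F. vmat_pow k L (?F ! j) v w)"
      using j0 member_le_sum[of j0 "{..<length ?F}" "\<lambda>j. vmat_pow k L (?F ! j) v w"] nonneg_vmat_pow
      unfolding nonneg_mat_def by auto
    thus "0 < vmat_F k L ?F v w" unfolding vmat_F_def using a(3) by simp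
  qed
qed

lemma well_chosen_with_unitvecs: "\<exists>F. well_chosen k L F \<and> (\<forall>i<k. unitvec i \<in> set F)"
  using well_chosen_box_degrees set_box_degrees unitvec_nonzero
  by (auto simp: in_Nk_def unitvec_def)


section \<open>The closure of a component\<close>

lemma closure_above_subset: "closure_above L C \<subseteq> V"
  using closure_above_iff by blast

lemma finite_closure_above: "finite (closure_above L C)"
  using finite_subset[OF closure_above_subset finite_V] .

lemma component_subset_closure: "is_component L C \<Longrightarrow> C \<subseteq> closure_above L C"
  using closure_above_iff component_subset path_between_refl by blast

lemma path_convex_closure: "path_convex (closure_above L C)"
  unfolding path_convex_def
proof (intro conjI closure_above_subset ballI allI impI)
  fix u w m assume "w \<in> closure_above L C" "path_between L u m" "path_between L m w"
  thus "m \<in> closure_above L C"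
    using path_between_in_V path_between_trans unfolding closure_above_iff by blast
qed

lemma closure_reached_from_component:
  assumes C: "is_component L C" and c: "c \<in> C" and m: "m \<in> closure_above L C" and cm: "path_between L c m"
  shows "m \<in> C"
  using m component_convex[OF C c _ cm] unfolding closure_above_iff by blast

lemma mvmult_closure_at_component:
  assumes C: "is_component L C" and B: "path_supported L B" and c: "c \<in> C"
  shows "mvmult (closure_above L C) B y c = mvmult C B y c"
  unfolding mvmult_def
proof (rule sum.mono_neutral_right[OF finite_closure_above component_subset_closure[OF C]], rule ballI)
  fix w assume w: "w \<in> closure_above L C - C"
  have "B c w = 0"
  proof (rule ccontr)
    assume "B c w \<noteq> 0"
    hence "path_between L c w"
      using B c w component_subset[OF C] closure_above_subset unfolding path_supported_def by blast
    thus False using closure_reached_from_component[OF C c] w by blast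
  qed
  thus "B c w * y w = 0" by simp
qed

lemma mvmult_closure_split:
  assumes "is_component L C"
  shows "mvmult (closure_above L C) B y m = mvmult C B y m + mvmult (closure_above L C - C) B y m"
proof -
  have "closure_above L C = C \<union> (closure_above L C - C)" using component_subset_closure[OF assms] by blast
  moreover have "finite C" using finite_subset[OF component_subset_closure[OF assms] finite_closure_above] .
  ultimately show ?thesis using mvmult_union[of C "closure_above L C - C" B y m] finite_closure_above
    by (metis Diff_disjoint finite_Diff)
qed

lemma closure_minus_component_saturated:
  assumes C: "is_component L C" and m: "m \<in> closure_above L C - C" and w: "w \<in> V" "vequiv L m w"
  shows "w \<in> closure_above L C - C"
proof -
  obtain c where "c \<in> C" "path_between L m c" using m closure_above_iff by blast
  hence "w \<in> closure_above L C" using w path_between_trans unfolding closure_above_iff vequiv_def by blast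
  moreover have "w \<notin> C"
    using m w component_convex[OF C _ _ _ path_between_refl[OF w(1)]] path_between_trans
    unfolding vequiv_def by (metis DiffD1 DiffD2 closure_reached_from_component[OF C])
  ultimately show ?thesis by blast
qed

lemma exists_minimal_vertex:
  assumes T: "finite T" "T \<noteq> {}"
  obtains m0 where "m0 \<in> T" "\<forall>w\<in>T. path_between L m0 w \<longrightarrow> path_between L w m0"
proof -
  \<comment> \<open>a vertex of T with the most predecessors in V\<close>
  define f where "f m = card {w \<in> V. path_between L w m}" for m
  have "Max (f ` T) \<in> f ` T" using T by (intro Max_in) auto
  then obtain m0 where m0: "m0 \<in> T" "f m0 = Max (f ` T)" by auto
  have "path_between L w m0" if w: "w \<in> T" "path_between L m0 w" for w
  proof -
    have sub: "{x \<in> V. path_between L x m0} \<subseteq> {x \<in> V. path_between L x w}"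
      using w(2) path_between_trans by blast
    moreover have "f w \<le> f m0" using m0 T w(1) by simp
    ultimately have "{x \<in> V. path_between L x m0} = {x \<in> V. path_between L x w}"
      using card_subset_eq[OF _ sub] finite_V unfolding f_def by (simp add: card_mono order_antisym)
    thus ?thesis using path_between_in_V[OF w(2)] path_between_refl by blast
  qed
  thus ?thesis using that m0(1) by blast
qed

text \<open>A nonnegative subeigenvector for the spectral radius, restricted to the component of a
  minimal vertex of its support, is still a subeigenvector there.\<close>

lemma spec_rad_le_component:
  assumes S: "S \<subseteq> V" and sat: "\<forall>m\<in>S. \<forall>w\<in>V. vequiv L m w \<longrightarrow> w \<in> S"
    and B: "path_supported L B" "nonneg_mat B" and r0: "0 < spec_rad S B"
  shows "\<exists>E. is_component L E \<and> E \<subseteq> S \<and> spec_rad S B \<le> spec_rad E B"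
proof -
  have fS: "finite S" using finite_subset[OF S finite_V] .
  obtain y where y: "\<forall>u\<in>S. 0 \<le> y u" "\<exists>u\<in>S. 0 < y u" "\<forall>u\<in>S. spec_rad S B * y u \<le> mvmult S B y u"
    using nonneg_subeigvec[OF fS _ r0] B(2) unfolding nonneg_mat_def by blast
  define supp where "supp = {m \<in> S. 0 < y m}"
  obtain m0 where m0: "m0 \<in> supp" "\<forall>w\<in>supp. path_between L m0 w \<longrightarrow> path_between L w m0"
    using exists_minimal_vertex[of supp] fS y(2) unfolding supp_def by auto
  define E where "E = {w \<in> V. vequiv L m0 w}"
  have m0V: "m0 \<in> V" using m0(1) S unfolding supp_def by blast
  have E: "is_component L E" "m0 \<in> E" "E \<subseteq> S"
    using component_of_vertex[OF m0V] path_between_refl[OF m0V] sat m0(1) m0V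
    unfolding E_def supp_def vequiv_def by auto
  have restr: "mvmult S B y u = mvmult E B y u" if u: "u \<in> E" for u
    unfolding mvmult_def
  proof (rule sum.mono_neutral_right[OF fS E(3)], rule ballI)
    fix w assume w: "w \<in> S - E"
    show "B u w * y w = 0"
    proof (cases "0 < y w")
      case True
      have "B u w = 0"
      proof (rule ccontr)
        assume "B u w \<noteq> 0"
        hence "path_between L u w" using B(1) u w E(3) S unfolding path_supported_def by blast
        hence "path_between L m0 w" using u path_between_trans unfolding E_def vequiv_def by blast
        hence "w \<in> E" using m0(2) w True S unfolding supp_def E_def vequiv_def by blast
        thus False using w by blast
      qed
      thus ?thesis by simp
    qed (use y(1) w in force)
  qed
  have "spec_rad S B \<le> spec_rad E B"
  proof (rule spec_rad_ge_subvec[OF finite_subset[OF E(3) fS] _ _ E(2)])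
    show "\<forall>u\<in>E. \<forall>w\<in>E. 0 \<le> B u w" using B(2) unfolding nonneg_mat_def by blast
    show "\<forall>u\<in>E. 0 \<le> y u" using y(1) E(3) by blast
    show "0 < y m0" using m0(1) unfolding supp_def by blast
    show "\<forall>u\<in>E. spec_rad S B * y u \<le> mvmult E B y u"
    proof
      fix u assume u: "u \<in> E"
      hence "spec_rad S B * y u \<le> mvmult S B y u" using y(3) E(3) by blast
      thus "spec_rad S B * y u \<le> mvmult E B y u" using restr[OF u] by simp
    qed
  qed
  thus ?thesis using E by blast
qed


section \<open>Harmonic components\<close>

lemma mvmult_vmat_F_into_component_pos:
  assumes C: "is_component L C" and wc: "well_chosen k L F"
    and z: "\<forall>u\<in>C. 0 < z u" and m: "m \<in> closure_above L C - C"
  shows "0 < mvmult C (vmat_F k L F) z m"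
proof -
  obtain c where c: "c \<in> C" "path_between L m c" using m closure_above_iff by blast
  hence "proper_path L m c" using m proper_path_if_neq by blast
  hence "0 < vmat_F k L F m c"
    using well_chosen_pos_iff[OF wc] m c(1) closure_above_subset component_subset[OF C] by blast
  thus ?thesis unfolding mvmult_def
    using z c(1) nonneg_vmat_F[of F] finite_path_convex[OF path_convex_component[OF C]]
    by (intro sum_pos2[OF _ c(1)]) (auto simp: nonneg_mat_def intro: less_imp_le)
qed

lemma perron_eigvec_extends_to_closure:
  assumes C: "is_component L C" and wc: "well_chosen k L F"
    and rS: "spec_rad (closure_above L C - C) (vmat_F k L F) < spec_rad C (vmat_F k L F)"
    and z: "\<forall>u\<in>C. 0 < z u" "\<forall>u\<in>C. mvmult C (vmat_F k L F) z u = spec_rad C (vmat_F k L F) * z u"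
  shows "\<exists>x. (\<forall>m\<in>closure_above L C. 0 < x m) \<and> (\<forall>m\<in>C. x m = z m)
           \<and> (\<forall>m\<in>closure_above L C. mvmult (closure_above L C) (vmat_F k L F) x m
                                      = spec_rad C (vmat_F k L F) * x m)"
proof -
  let ?W = "closure_above L C" and ?S = "closure_above L C - C" and ?F = "vmat_F k L F"
  let ?\<Phi> = "spec_rad C ?F"
  have fS: "finite ?S" using finite_closure_above by simp
  have Fnn: "0 \<le> ?F u w" for u w using nonneg_vmat_F unfolding nonneg_mat_def by blast
  have \<Phi>0: "0 < ?\<Phi>" using rS spec_rad_nonneg[OF fS, of ?F] by linarith
  \<comment> \<open>on S the eigenvalue equation reads (\<Phi> - A_F^S) u = A_F^{S,C} z\<close>
  define b where "b m = mvmult C ?F z m" for m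
  have b0: "0 < b m" if "m \<in> ?S" for m
    unfolding b_def using mvmult_vmat_F_into_component_pos[OF C wc z(1) that] .
  obtain u where u: "\<forall>m\<in>?S. ?\<Phi> * u m - mvmult ?S ?F u m = b m"
    using resolvent_solvable[OF fS rS] by blast
  have "\<forall>m\<in>?S. 0 \<le> u m"
    by (rule resolvent_solution_nonneg[OF fS _ rS u]) (use Fnn b0 in \<open>auto intro: less_imp_le\<close>)
  have upos: "0 < u m" if m: "m \<in> ?S" for m
  proof -
    have "0 \<le> mvmult ?S ?F u m" using Fnn \<open>\<forall>m\<in>?S. 0 \<le> u m\<close> by (intro mvmult_nonneg) auto
    hence "0 < ?\<Phi> * u m" using u m b0[OF m] by (simp add: algebra_simps)
    thus ?thesis using \<Phi>0 by (simp add: zero_less_mult_iff)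
  qed
  define x where "x m = (if m \<in> C then z m else u m)" for m
  have "mvmult ?W ?F x m = ?\<Phi> * x m" if m: "m \<in> ?W" for m
  proof (cases "m \<in> C")
    case True
    have "mvmult ?W ?F x m = mvmult C ?F z m"
      unfolding mvmult_closure_at_component[OF C path_supported_vmat_F True]
      by (rule mvmult_cong) (simp add: x_def)
    thus ?thesis using z(2) True unfolding x_def by simp
  next
    case False
    have "mvmult ?W ?F x m = b m + mvmult ?S ?F u m"
      unfolding mvmult_closure_split[OF C] b_def
      by (intro arg_cong2[where f="(+)"] mvmult_cong) (auto simp: x_def)
    thus ?thesis using u m False unfolding x_def by (simp add: algebra_simps)
  qed
  moreover have "\<forall>m\<in>?W. 0 < x m" using z(1) upos unfolding x_def by auto
  ultimately show ?thesis unfolding x_def by auto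
qed

lemma closure_eigenspace_dim1:
  assumes C: "is_component L C" "\<not> trivial_comp L C" and wc: "well_chosen k L F"
    and rS: "spec_rad (closure_above L C - C) (vmat_F k L F) < spec_rad C (vmat_F k L F)"
    and x: "\<forall>m\<in>closure_above L C. 0 < x m"
      "\<forall>m\<in>closure_above L C. mvmult (closure_above L C) (vmat_F k L F) x m = spec_rad C (vmat_F k L F) * x m"
    and y: "\<forall>m\<in>closure_above L C. mvmult (closure_above L C) (vmat_F k L F) y m = spec_rad C (vmat_F k L F) * y m"
  shows "\<exists>c. \<forall>m\<in>closure_above L C. y m = c * x m"
proof -
  let ?W = "closure_above L C" and ?S = "closure_above L C - C" and ?F = "vmat_F k L F"
  let ?\<Phi> = "spec_rad C ?F"
  have WC: "C \<subseteq> ?W" by (rule component_subset_closure[OF C(1)])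
  have on_C: "\<forall>m\<in>C. mvmult C ?F v m = ?\<Phi> * v m" if ev: "\<forall>m\<in>?W. mvmult ?W ?F v m = ?\<Phi> * v m" for v
  proof
    fix m assume m: "m \<in> C"
    have "mvmult C ?F v m = mvmult ?W ?F v m"
      by (rule mvmult_closure_at_component[OF C(1) path_supported_vmat_F m, symmetric])
    also have "\<dots> = ?\<Phi> * v m" using ev WC m by blast
    finally show "mvmult C ?F v m = ?\<Phi> * v m" .
  qed
  obtain c where c: "\<forall>m\<in>C. y m = c * x m"
    using pos_eigvec_eigenspace_dim1[OF finite_path_convex[OF path_convex_component[OF C(1)]]
        component_nonempty[OF C(1)] _ _ on_C[OF x(2)] on_C[OF y]]
      vmat_F_pos_in_component[OF wc C] x(1) WC by blast
  define v where "v m = y m - c * x m" for m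
  have v0: "\<forall>m\<in>C. v m = 0" using c unfolding v_def by simp
  have "\<forall>m\<in>?S. mvmult ?S ?F v m = ?\<Phi> * v m"
  proof
    fix m assume m: "m \<in> ?S"
    have "mvmult ?W ?F v m = ?\<Phi> * v m"
      using x(2) y m unfolding v_def by (simp add: mvmult_diff mvmult_cmult algebra_simps)
    moreover have "mvmult C ?F v m = 0" using v0 unfolding mvmult_def by simp
    ultimately show "mvmult ?S ?F v m = ?\<Phi> * v m" using mvmult_closure_split[OF C(1)] by simp
  qed
  \<comment> \<open>a nonzero v on S would make \<Phi> an eigenvalue of A_F^S\<close>
  hence "\<forall>m\<in>?S. v m = 0"
    using is_eigval_of_real_eigvec[of ?S v ?F ?\<Phi>] eigval_norm_le_spec_rad[of ?S ?F] rS
      finite_closure_above spec_rad_nonneg[of C ?F] finite_path_convex[OF path_convex_component[OF C(1)]]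
    by force
  thus ?thesis using v0 unfolding v_def by (intro exI[of _ c]) auto
qed

lemma closure_common_eigvec:
  assumes C: "is_component L C" "\<not> trivial_comp L C" and wc: "well_chosen k L F"
    and rS: "spec_rad (closure_above L C - C) (vmat_F k L F) < spec_rad C (vmat_F k L F)"
  shows "\<exists>x. (\<forall>m\<in>closure_above L C. 0 < x m)
           \<and> (\<forall>i<k. \<forall>m\<in>closure_above L C. mvmult (closure_above L C) (A i) x m = spec_rad C (A i) * x m)"
proof -
  let ?W = "closure_above L C" and ?F = "vmat_F k L F"
  let ?\<Phi> = "spec_rad C ?F"
  obtain z where z: "\<forall>u\<in>C. 0 < z u" "\<forall>u\<in>C. mvmult C ?F z u = ?\<Phi> * z u"
      "\<forall>i<k. \<forall>u\<in>C. mvmult C (A i) z u = spec_rad C (A i) * z u"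
    using component_common_eigvec[OF wc C] by blast
  obtain x where x: "\<forall>m\<in>?W. 0 < x m" "\<forall>m\<in>C. x m = z m" "\<forall>m\<in>?W. mvmult ?W ?F x m = ?\<Phi> * x m"
    using perron_eigvec_extends_to_closure[OF C(1) wc rS z(1,2)] by blast
  obtain c1 where c1: "c1 \<in> C" using component_nonempty[OF C(1)] by blast
  have c1W: "c1 \<in> ?W" using c1 component_subset_closure[OF C(1)] by blast
  \<comment> \<open>A_i commutes with A_F, so it maps the one-dimensional \<Phi>-eigenspace of A_F on the closure into itself\<close>
  have "\<forall>m\<in>?W. mvmult ?W (A i) x m = spec_rad C (A i) * x m" if i: "i < k" for i
  proof -
    have "\<forall>m\<in>?W. mvmult ?W ?F (mvmult ?W (A i) x) m = ?\<Phi> * mvmult ?W (A i) x m"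
      using x(3) mvmult_vmat_F_commute[OF path_convex_closure]
      by (simp add: mvmult_cong[of ?W _ "\<lambda>w. ?\<Phi> * x w"] mvmult_cmult)
    then obtain c where c: "\<forall>m\<in>?W. mvmult ?W (A i) x m = c * x m"
      using closure_eigenspace_dim1[OF C wc rS x(1,3)] by blast
    have "c * x c1 = mvmult ?W (A i) x c1" using c c1W by simp
    also have "\<dots> = mvmult C (A i) x c1" by (rule mvmult_closure_at_component[OF C(1) path_supported_vmat c1])
    also have "\<dots> = mvmult C (A i) z c1" using x(2) by (rule mvmult_cong)
    also have "\<dots> = spec_rad C (A i) * x c1" using z(3) i c1 x(2) by simp
    finally have "c * x c1 = spec_rad C (A i) * x c1" .
    moreover have "0 < x c1" using x(1) c1W by blast
    ultimately have "c = spec_rad C (A i)" by simp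
    thus ?thesis using c by simp
  qed
  thus ?thesis using x(1) by blast
qed

lemma harmonic_imp_radii_dominated:
  assumes C: "is_component L C" and pos: "positive_comp k L C"
    and wc: "well_chosen k L F" and harm: "F_harmonic k L F C"
    and D: "is_component L D" "D \<subseteq> closure_above L C - C"
  shows "(\<forall>i<k. spec_rad D (A i) \<le> spec_rad C (A i)) \<and> (\<exists>i<k. spec_rad D (A i) \<noteq> spec_rad C (A i))"
proof -
  let ?W = "closure_above L C" and ?S = "closure_above L C - C" and ?F = "vmat_F k L F"
  have ntC: "\<not> trivial_comp L C" by (rule positive_comp_nontrivial[OF C pos])
  have neD: "D \<noteq> {}" by (rule component_nonempty[OF D(1)])
  have rS: "spec_rad ?S ?F < spec_rad C ?F" using harm neD D(2) unfolding F_harmonic_def by auto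
  obtain x where x: "\<forall>m\<in>?W. 0 < x m" "\<forall>i<k. \<forall>m\<in>?W. mvmult ?W (A i) x m = spec_rad C (A i) * x m"
    using closure_common_eigvec[OF C ntC wc rS] by blast
  have le: "spec_rad D (A i) \<le> spec_rad C (A i)" if i: "i < k" for i
  proof (rule spec_rad_le_supervec_subset[OF finite_closure_above _ neD _ x(1)])
    show "D \<subseteq> ?W" using D(2) by blast
    show "\<forall>u\<in>?W. \<forall>w\<in>?W. 0 \<le> A i u w" using nonneg_vmat[of i] unfolding nonneg_mat_def by blast
    show "\<forall>u\<in>D. mvmult ?W (A i) x u \<le> spec_rad C (A i) * x u" using x(2) i D(2) by auto
  qed
  have "\<exists>i<k. spec_rad D (A i) \<noteq> spec_rad C (A i)"
  proof (cases "trivial_comp L D")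
    case True
    thus ?thesis using spec_rad_vmat_trivial[OF D(1) True, of 0] pos k_pos
      unfolding positive_comp_def by (intro exI[of _ 0]) auto
  next
    case False
    \<comment> \<open>equal radii would give A_F^D the spectral radius of A_F^C, which exceeds that of A_F^S\<close>
    show ?thesis
    proof (rule ccontr)
      assume "\<not> ?thesis"
      hence eq: "spec_rad D ?F = spec_rad C ?F"
        using spec_rad_vmat_F[OF wc D(1) False] spec_rad_vmat_F[OF wc C ntC] F_poly_cong by auto
      obtain y where y: "\<forall>u\<in>D. 0 < y u" "\<forall>u\<in>D. mvmult D ?F y u = spec_rad D ?F * y u"
        using component_common_eigvec[OF wc D(1) False] by blast
      obtain d where d: "d \<in> D" using neD by blast
      have "spec_rad D ?F \<le> spec_rad ?S ?F"
      proof (rule spec_rad_ge_of_subset[of ?S D ?F y d])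
        show "finite ?S" using finite_closure_above by simp
        show "\<forall>u\<in>?S. \<forall>w\<in>?S. 0 \<le> ?F u w" using nonneg_vmat_F unfolding nonneg_mat_def by blast
        show "\<forall>u\<in>D. 0 \<le> y u" using y(1) by (auto intro: less_imp_le)
        show "\<forall>u\<in>D. spec_rad D ?F * y u \<le> mvmult D ?F y u" using y(2) by simp
      qed (use D(2) d y(1) in auto)
      thus False using rS eq by simp
    qed
  qed
  thus ?thesis using le by blast
qed

lemma radii_dominated_imp_harmonic:
  assumes C: "is_component L C" and pos: "positive_comp k L C"
    and wc: "well_chosen k L F" and units: "\<forall>i<k. unitvec i \<in> set F"
    and dom: "\<forall>D. is_component L D \<and> D \<subseteq> closure_above L C - C \<longrightarrow>
                (\<forall>i<k. spec_rad D (A i) \<le> spec_rad C (A i)) \<and> (\<exists>i<k. spec_rad D (A i) \<noteq> spec_rad C (A i))"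
  shows "F_harmonic k L F C"
proof -
  let ?S = "closure_above L C - C" and ?F = "vmat_F k L F"
  define s where "s i = spec_rad C (A i)" for i
  have ntC: "\<not> trivial_comp L C" by (rule positive_comp_nontrivial[OF C pos])
  have spos: "\<forall>i<k. 0 < s i" using pos unfolding positive_comp_def s_def by auto
  have \<Phi>: "spec_rad C ?F = F_poly k F s"
    using spec_rad_vmat_F[OF wc C ntC] unfolding s_def by simp
  have "s 0 \<le> F_poly k F s" using F_poly_ge_coord[of k s 0 F] spos units k_pos by (auto intro: less_imp_le)
  hence \<Phi>0: "0 < spec_rad C ?F" using \<Phi> spos k_pos by fastforce
  have "spec_rad ?S ?F < spec_rad C ?F" if "?S \<noteq> {}"
  proof (rule ccontr)
    assume ge: "\<not> spec_rad ?S ?F < spec_rad C ?F"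
    hence "0 < spec_rad ?S ?F" using \<Phi>0 by simp
    then obtain E where E: "is_component L E" "E \<subseteq> ?S" "spec_rad ?S ?F \<le> spec_rad E ?F"
      using spec_rad_le_component[of ?S] closure_above_subset closure_minus_component_saturated[OF C]
        path_supported_vmat_F nonneg_vmat_F by blast
    have "spec_rad E ?F < spec_rad C ?F"
    proof (cases "trivial_comp L E")
      case True thus ?thesis using spec_rad_vmat_F_trivial[OF wc E(1)] \<Phi>0 by simp
    next
      case False
      obtain i where i: "i < k" "spec_rad E (A i) \<noteq> s i" using dom E(1,2) unfolding s_def by blast
      have "\<forall>i<k. 0 \<le> spec_rad E (A i) \<and> spec_rad E (A i) \<le> s i"
        using dom E(1,2) spec_rad_nonneg finite_path_convex[OF path_convex_component[OF E(1)]]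
        unfolding s_def by blast
      hence "F_poly k F (\<lambda>i. spec_rad E (A i)) < F_poly k F s"
        using i units by (intro F_poly_strict_mono[of k _ _ i]) (auto simp: order.strict_iff_order)
      thus ?thesis using spec_rad_vmat_F[OF wc E(1) False] \<Phi> by simp
    qed
    thus False using E(3) ge by simp
  qed
  thus ?thesis unfolding F_harmonic_def using ntC by blast
qed

end

theorem lemma7p11:
  fixes k :: nat and L :: "'a kgraph" and C :: "'a set"
  assumes "is_kgraph k L" and "finite_kgraph k L" and "no_sources k L"
    and "is_component L C"
  shows "positive_harmonic k L C \<longleftrightarrow>
           positive_comp k L C \<and>
           (\<forall>D. is_component L D \<and> D \<subseteq> closure_above L C - C \<longrightarrow>
              (\<forall>i<k. spec_rad D (vmat L i) \<le> spec_rad C (vmat L i)) \<and>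
              (\<exists>i<k. spec_rad D (vmat L i) \<noteq> spec_rad C (vmat L i)))"
  (is "_ \<longleftrightarrow> _ \<and> ?dom")
proof -
  interpret fin_kgraph k L using assms(1,2) by unfold_locales
  show ?thesis
  proof
    assume "positive_harmonic k L C"
    then obtain F where "positive_comp k L C" "well_chosen k L F" "F_harmonic k L F C"
      unfolding positive_harmonic_def by blast
    thus "positive_comp k L C \<and> ?dom" using harmonic_imp_radii_dominated[OF assms(4)] by blast
  next
    assume "positive_comp k L C \<and> ?dom"
    moreover obtain F where "well_chosen k L F" "\<forall>i<k. unitvec i \<in> set F"
      using well_chosen_with_unitvecs by blast
    ultimately show "positive_harmonic k L C"
      unfolding positive_harmonic_def using radii_dominated_imp_harmonic[OF assms(4)] by blast
  qed
qed

end
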